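(* Let $p$ be a prime and $X$ a countable set. A matrix $M=(a_{ij})_{i,j\in X}$ with entries in $\mathbb{Q}_p$ is of the form $M=M_A$ for some $A\in\mathcal{B}(\mathbb{Q}_p(X))$ if and only if (a) $M$ has only finitely many entries in $\mathbb{Q}_p\setminus\mathbb{Z}_p$, and (b) for every $k\in X$ one has $\lim_{i\to\infty}a_{ik}=0$ and $\lim_{j\to\infty}a_{kj}=0$ (limits along the cofinite filter on $X$, i.e. for every $\varepsilon>0$ only finitely many $i$ satisfy $|a_{ik}|_p>\varepsilon$, and similarly for $j$).
   Context: $\mathbb{Q}_p(X)$ is the set of maps $\xi:X\to\mathbb{Q}_p$ with $|\xi(i)|_p\le1$ for all but finitely many $i$, a $\mathbb{Z}_p$-module under coordinatewise operations, with the topology $\tau$ in which $A\subseteq\mathbb{Q}_p(X)$ is open iff for every finite $P\subseteq X$ the set $A\cap\big(\prod_{i\in P}\mathbb{Q}_p\times\prod_{j\in X\setminus P}\mathbb{Z}_p\big)$ is open in the product topology. $\mathcal{B}(\mathbb{Q}_p(X))$ is the set of $\tau$-continuous $\mathbb{Z}_p$-linear maps on $\mathbb{Q}_p(X)$. For $x\in X$, $\delta_x\in\mathbb{Q}_p(X)$ is given by $\delta_x(x)=1$, $\delta_x(y)=0$ for $y\ne x$. For $A\in\mathcal{B}(\mathbb{Q}_p(X))$, its matrix is $M_A=(A_{ij})_{i,j\in X}$ with $A_{ij}=(A\delta_j)(i)$. *)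

theory Defs
  imports "HOL-Analysis.Analysis"
begin

text \<open>An element x of Q_p is represented by the coherent sequence of its residues
  modulo p^n Z_p (n = 0,1,2,...), i.e. by the isomorphism
  Q_p = lim_n Q_p / p^n Z_p, where Q_p / p^n Z_p = Z[1/p] / p^n Z and each residue
  class is represented by its unique representative in Z[1/p] intersected with [0, p^n).\<close>

definition rmod :: "rat \<Rightarrow> rat \<Rightarrow> rat" where
  "rmod r m = r - of_int (floor (r / m)) * m"

definition padic_set :: "nat \<Rightarrow> (nat \<Rightarrow> rat) set" where
  "padic_set p = {x. \<forall>n.
      (\<exists>(a::int) (k::nat). x n = of_int a / of_nat p ^ k)
    \<and> 0 \<le> x n \<and> x n < of_nat p ^ n
    \<and> (\<exists>z::int. x (Suc n) - x n = of_int z * of_nat p ^ n)}"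

definition Zp :: "nat \<Rightarrow> (nat \<Rightarrow> rat) set" where
  "Zp p = {x \<in> padic_set p. x 0 = 0}"

definition padic_zero :: "nat \<Rightarrow> rat" where
  "padic_zero = (\<lambda>n. 0)"

definition padic_one :: "nat \<Rightarrow> nat \<Rightarrow> rat" where
  "padic_one p = (\<lambda>n. rmod 1 (of_nat p ^ n))"

definition padic_add :: "nat \<Rightarrow> (nat \<Rightarrow> rat) \<Rightarrow> (nat \<Rightarrow> rat) \<Rightarrow> (nat \<Rightarrow> rat)" where
  "padic_add p x y = (\<lambda>n. rmod (x n + y n) (of_nat p ^ n))"

definition padic_neg :: "nat \<Rightarrow> (nat \<Rightarrow> rat) \<Rightarrow> (nat \<Rightarrow> rat)" where
  "padic_neg p x = (\<lambda>n. rmod (- x n) (of_nat p ^ n))"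

text \<open>Scalar multiplication Z_p x Q_p -> Q_p. If x 0 has denominator D = p^d then
  c x is congruent to c_(n+D) x_n modulo p^n Z_p (as D \<ge> d).\<close>
definition padic_smul :: "nat \<Rightarrow> (nat \<Rightarrow> rat) \<Rightarrow> (nat \<Rightarrow> rat) \<Rightarrow> (nat \<Rightarrow> rat)" where
  "padic_smul p c x = (\<lambda>n. rmod (c (n + nat (snd (quotient_of (x 0)))) * x n) (of_nat p ^ n))"

definition padic_abs :: "nat \<Rightarrow> (nat \<Rightarrow> rat) \<Rightarrow> real" where
  "padic_abs p x =
     (if (\<forall>n. x n = 0) then 0
      else if x 0 \<noteq> 0 then real_of_int (snd (quotient_of (x 0)))
      else real p powr (- real (LEAST n. x (Suc n) \<noteq> 0)))"

definition padic_dist :: "nat \<Rightarrow> (nat \<Rightarrow> rat) \<Rightarrow> (nat \<Rightarrow> rat) \<Rightarrow> real" where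
  "padic_dist p x y = padic_abs p (padic_add p x (padic_neg p y))"

definition padic_top :: "nat \<Rightarrow> (nat \<Rightarrow> rat) topology" where
  "padic_top p = Metric_space.mtopology (padic_set p) (padic_dist p)"

definition QpX :: "nat \<Rightarrow> ('x \<Rightarrow> nat \<Rightarrow> rat) set" where
  "QpX p = {\<xi>. (\<forall>i. \<xi> i \<in> padic_set p) \<and> finite {i. \<xi> i \<notin> Zp p}}"

definition QpX_add :: "nat \<Rightarrow> ('x \<Rightarrow> nat \<Rightarrow> rat) \<Rightarrow> ('x \<Rightarrow> nat \<Rightarrow> rat) \<Rightarrow> ('x \<Rightarrow> nat \<Rightarrow> rat)" where
  "QpX_add p \<xi> \<eta> = (\<lambda>i. padic_add p (\<xi> i) (\<eta> i))"

definition QpX_smul :: "nat \<Rightarrow> (nat \<Rightarrow> rat) \<Rightarrow> ('x \<Rightarrow> nat \<Rightarrow> rat) \<Rightarrow> ('x \<Rightarrow> nat \<Rightarrow> rat)" where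
  "QpX_smul p c \<xi> = (\<lambda>i. padic_smul p c (\<xi> i))"

definition block_top :: "nat \<Rightarrow> 'x set \<Rightarrow> ('x \<Rightarrow> nat \<Rightarrow> rat) topology" where
  "block_top p P = product_topology
      (\<lambda>i. if i \<in> P then padic_top p else subtopology (padic_top p) (Zp p)) UNIV"

definition tau_open :: "nat \<Rightarrow> ('x \<Rightarrow> nat \<Rightarrow> rat) set \<Rightarrow> bool" where
  "tau_open p A \<longleftrightarrow> A \<subseteq> QpX p \<and>
     (\<forall>P. finite P \<longrightarrow> openin (block_top p P) (A \<inter> topspace (block_top p P)))"

definition tau_continuous :: "nat \<Rightarrow> (('x \<Rightarrow> nat \<Rightarrow> rat) \<Rightarrow> ('x \<Rightarrow> nat \<Rightarrow> rat)) \<Rightarrow> bool" where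
  "tau_continuous p A \<longleftrightarrow> (\<forall>U. tau_open p U \<longrightarrow> tau_open p {\<xi> \<in> QpX p. A \<xi> \<in> U})"

definition Zp_linear :: "nat \<Rightarrow> (('x \<Rightarrow> nat \<Rightarrow> rat) \<Rightarrow> ('x \<Rightarrow> nat \<Rightarrow> rat)) \<Rightarrow> bool" where
  "Zp_linear p A \<longleftrightarrow> (\<forall>\<xi>\<in>QpX p. A \<xi> \<in> QpX p)
     \<and> (\<forall>\<xi>\<in>QpX p. \<forall>\<eta>\<in>QpX p. A (QpX_add p \<xi> \<eta>) = QpX_add p (A \<xi>) (A \<eta>))
     \<and> (\<forall>c\<in>Zp p. \<forall>\<xi>\<in>QpX p. A (QpX_smul p c \<xi>) = QpX_smul p c (A \<xi>))"

definition bounded_ops :: "nat \<Rightarrow> (('x \<Rightarrow> nat \<Rightarrow> rat) \<Rightarrow> ('x \<Rightarrow> nat \<Rightarrow> rat)) set" where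
  "bounded_ops p = {A. Zp_linear p A \<and> tau_continuous p A}"

definition delta :: "nat \<Rightarrow> 'x \<Rightarrow> ('x \<Rightarrow> nat \<Rightarrow> rat)" where
  "delta p x = (\<lambda>y. if y = x then padic_one p else padic_zero)"

definition op_matrix :: "nat \<Rightarrow> (('x \<Rightarrow> nat \<Rightarrow> rat) \<Rightarrow> ('x \<Rightarrow> nat \<Rightarrow> rat)) \<Rightarrow> 'x \<Rightarrow> 'x \<Rightarrow> (nat \<Rightarrow> rat)" where
  "op_matrix p A = (\<lambda>i j. A (delta p j) i)"

end

theory Submission
  imports Defs
begin

text \<open>An element of Q_p is stored as the coherent sequence of its residues modulo p^n Z_p, so
  everything reduces to congruences modulo p^n between rationals whose denominators are powers
  of p. A set is \<tau>-open iff around each of its points in a block Q_p^P \<times> Z_p^(X - P) it contains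
  a cylinder fixing the n-th residues of finitely many coordinates.

  If A is bounded, continuity at 0 in the block Z_p^X yields a finite set H of coordinates such
  that A \<delta>_j is integral, with vanishing n-th residue in a given row, for every j outside H.
  This gives the finiteness of the non-integral entries and the decay along rows; the decay
  along columns follows from \<delta>_k = p^n (p^(-n) \<delta>_k).

  Conversely, for M satisfying (a) and (b), the residue of (M \<xi>)_i modulo p^n is the finite sum
  of the residues of M_ij \<xi>_j modulo p^(n+e), where p^e clears all denominators of M and \<xi>.
  This defines a Z_p-linear operator with matrix M, which is \<tau>-continuous because each residue
  of M \<xi> depends on finitely many residues of \<xi>.\<close>

definition den :: "rat \<Rightarrow> int" where
  "den r = snd (quotient_of r)"

lemma den_pos: "0 < den r"
  unfolding den_def by (rule quotient_of_denom_pos')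

lemma of_int_mult_in_Ints_iff: "of_int d * r \<in> \<int> \<longleftrightarrow> den r dvd d"
proof -
  obtain a b where q: "quotient_of r = (a, b)" by (cases "quotient_of r")
  have b: "b > 0" and r: "r = of_int a / of_int b" and "coprime a b"
    using q quotient_of_denom_pos quotient_of_div quotient_of_coprime by blast+
  have "of_int d * r \<in> \<int> \<longleftrightarrow> b dvd d * a"
  proof
    assume "of_int d * r \<in> \<int>"
    then obtain k where "of_int d * r = (of_int k :: rat)" by (auto elim: Ints_cases)
    then have "of_int (d * a) = (of_int (b * k) :: rat)" using b r by (simp add: field_simps)
    then show "b dvd d * a" by (metis dvd_triv_left of_int_eq_iff)
  next
    assume "b dvd d * a"
    then obtain k where k: "d * a = b * k" by blast
    have "of_int d * r = of_int (d * a) / (of_int b :: rat)" using r by simp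
    also have "\<dots> = of_int k" using k b by simp
    finally show "of_int d * r \<in> \<int>" by simp
  qed
  also have "\<dots> \<longleftrightarrow> b dvd d"
    using \<open>coprime a b\<close> by (simp add: coprime_commute coprime_dvd_mult_left_iff)
  finally show ?thesis using q by (simp add: den_def)
qed

lemma den_eqI: "(\<And>d. of_int d * r \<in> \<int> \<longleftrightarrow> of_int d * s \<in> \<int>) \<Longrightarrow> den r = den s"
  by (meson of_int_mult_in_Ints_iff den_pos dvd_refl less_le zdvd_antisym_nonneg)

lemma den_add_of_int: "den (r + of_int z) = den r"
proof (rule den_eqI)
  fix d :: int
  have "of_int d * (r + of_int z) = of_int d * r + of_int (d * z)" by (simp add: algebra_simps)
  then show "of_int d * (r + of_int z) \<in> \<int> \<longleftrightarrow> of_int d * r \<in> \<int>"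
    by (metis Ints_add Ints_diff Ints_of_int add_diff_cancel_right')
qed

lemma den_minus: "den (- r) = den r"
  by (rule den_eqI) (metis Ints_minus minus_minus mult_minus_right)

lemma den_eq_1_iff: "den r = 1 \<longleftrightarrow> r \<in> \<int>"
  using of_int_mult_in_Ints_iff[of 1 r] den_pos[of r] by auto

lemma rmod_0 [simp]: "rmod 0 m = 0"
  unfolding rmod_def by simp

locale padic =
  fixes p :: nat
  assumes prime_p: "prime p"
begin

lemma p_ge_2: "p \<ge> 2"
  using prime_p prime_ge_2_nat by blast

lemma p_pos [simp]: "0 < p" "p \<noteq> 0"
  using p_ge_2 by simp_all

lemma exists_inverse_ppow_less: "0 < \<epsilon> \<Longrightarrow> \<exists>n. 1 / real p ^ n < \<epsilon>"
proof -
  assume "0 < \<epsilon>"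
  moreover have "1 / real p < 1" using p_ge_2 by simp
  ultimately obtain n where "(1 / real p) ^ n < \<epsilon>" using real_arch_pow_inv by blast
  then show ?thesis by (auto simp: power_one_over)
qed

lemma ppow_pos: "(0::rat) < of_nat p ^ n"
  by simp

definition pcong :: "nat \<Rightarrow> rat \<Rightarrow> rat \<Rightarrow> bool" where
  "pcong n r s \<longleftrightarrow> (r - s) / of_nat p ^ n \<in> \<int>"

definition pfrac :: "nat \<Rightarrow> rat \<Rightarrow> bool" where
  "pfrac e r \<longleftrightarrow> of_nat p ^ e * r \<in> \<int>"

lemma pcong_refl [simp]: "pcong n r r"
  unfolding pcong_def by simp

lemma pcong_sym: "pcong n r s \<Longrightarrow> pcong n s r"
proof -
  have "(s - r) / of_nat p ^ n = - ((r - s) / of_nat p ^ n)"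
    by (simp add: field_simps)
  then show "pcong n r s \<Longrightarrow> pcong n s r"
    unfolding pcong_def by (metis Ints_minus)
qed

lemma pcong_trans [trans]: "pcong n r s \<Longrightarrow> pcong n s t \<Longrightarrow> pcong n r t"
proof -
  have "(r - t) / of_nat p ^ n = (r - s) / of_nat p ^ n + (s - t) / of_nat p ^ n"
    by (simp add: field_simps)
  then show "pcong n r s \<Longrightarrow> pcong n s t \<Longrightarrow> pcong n r t"
    unfolding pcong_def by (metis Ints_add)
qed

lemma pcong_add: "pcong n r s \<Longrightarrow> pcong n r' s' \<Longrightarrow> pcong n (r + r') (s + s')"
proof -
  have "(r + r' - (s + s')) / of_nat p ^ n = (r - s) / of_nat p ^ n + (r' - s') / of_nat p ^ n"
    by (simp add: field_simps)
  then show "pcong n r s \<Longrightarrow> pcong n r' s' \<Longrightarrow> pcong n (r + r') (s + s')"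
    unfolding pcong_def by (metis Ints_add)
qed

lemma pcong_mono: "pcong m r s \<Longrightarrow> n \<le> m \<Longrightarrow> pcong n r s"
proof -
  assume "pcong m r s" "n \<le> m"
  moreover from \<open>n \<le> m\<close> have "(of_nat p ^ m :: rat) = of_nat (p ^ (m - n)) * of_nat p ^ n"
    by (simp flip: power_add)
  then have "(r - s) / of_nat p ^ n = (r - s) / of_nat p ^ m * of_nat (p ^ (m - n))"
    by (simp add: field_simps)
  ultimately show ?thesis
    unfolding pcong_def by (metis Ints_mult Ints_of_nat)
qed

lemma pcong_mult_left: "pcong (n + e) r s \<Longrightarrow> pfrac e t \<Longrightarrow> pcong n (t * r) (t * s)"
proof -
  assume "pcong (n + e) r s" "pfrac e t"
  moreover have "(t * r - t * s) / of_nat p ^ n = of_nat p ^ e * t * ((r - s) / of_nat p ^ (n + e))"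
    using ppow_pos[of n] ppow_pos[of e] by (simp add: field_simps power_add)
  ultimately show ?thesis
    unfolding pcong_def pfrac_def by (metis Ints_mult)
qed

lemma pcong_mult_left': "pcong m r s \<Longrightarrow> pfrac e t \<Longrightarrow> n + e \<le> m \<Longrightarrow> pcong n (t * r) (t * s)"
  using pcong_mono pcong_mult_left by blast

lemma pcong_mult_right': "pcong m r s \<Longrightarrow> pfrac e t \<Longrightarrow> n + e \<le> m \<Longrightarrow> pcong n (r * t) (s * t)"
  using pcong_mult_left' by (simp add: mult.commute)

lemma pcong_sum: "(\<And>j. j \<in> S \<Longrightarrow> pcong n (f j) (g j)) \<Longrightarrow> pcong n (sum f S) (sum g S)"
  by (induction S rule: infinite_finite_induct) (auto intro: pcong_add)

lemma pcong_0_iff_pfrac: "pcong 0 r 0 \<longleftrightarrow> pfrac 0 r"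
  unfolding pcong_def pfrac_def by simp

lemma pcong_ppow_multiple: "pcong n (of_nat p ^ n) 0"
  unfolding pcong_def using ppow_pos[of n] by simp

lemma pfrac_mono: "pfrac e r \<Longrightarrow> e \<le> e' \<Longrightarrow> pfrac e' r"
proof -
  assume "pfrac e r" "e \<le> e'"
  moreover have "of_nat p ^ e' * r = of_nat (p ^ (e' - e)) * (of_nat p ^ e * r)"
    using \<open>e \<le> e'\<close> by (simp add: mult.assoc flip: power_add)
  ultimately show ?thesis
    unfolding pfrac_def by (metis Ints_mult Ints_of_nat)
qed

lemma pfrac_of_int [simp]: "pfrac e (of_int z)"
  unfolding pfrac_def by (metis Ints_of_int of_int_mult of_int_of_nat_eq of_int_power)

lemma pfrac_0 [simp]: "pfrac e 0"
  using pfrac_of_int[of e 0] by simp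

lemma pfrac_add: "pfrac e r \<Longrightarrow> pfrac e s \<Longrightarrow> pfrac e (r + s)"
  unfolding pfrac_def by (simp add: distrib_left)

lemma pfrac_diff: "pfrac e r \<Longrightarrow> pfrac e s \<Longrightarrow> pfrac e (r - s)"
  unfolding pfrac_def by (simp add: right_diff_distrib)

lemma pfrac_mult: "pfrac e r \<Longrightarrow> pfrac e' s \<Longrightarrow> pfrac (e + e') (r * s)"
proof -
  have "of_nat p ^ (e + e') * (r * s) = (of_nat p ^ e * r) * (of_nat p ^ e' * s)"
    by (simp add: power_add algebra_simps)
  then show "pfrac e r \<Longrightarrow> pfrac e' s \<Longrightarrow> pfrac (e + e') (r * s)"
    unfolding pfrac_def by (metis Ints_mult)
qed

lemma pfrac_sum: "(\<And>j. j \<in> S \<Longrightarrow> pfrac e (f j)) \<Longrightarrow> pfrac e (sum f S)"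
  by (induction S rule: infinite_finite_induct) (auto intro: pfrac_add)

lemma pfrac_pcong: "pfrac e r \<Longrightarrow> pcong n r s \<Longrightarrow> pfrac e s"
proof -
  assume "pfrac e r" "pcong n r s"
  moreover have "of_nat p ^ e * s = of_nat p ^ e * r - of_nat (p ^ (e + n)) * ((r - s) / of_nat p ^ n)"
    using ppow_pos[of n] by (simp add: field_simps power_add)
  ultimately show ?thesis
    unfolding pfrac_def pcong_def by (metis Ints_diff Ints_mult Ints_of_nat)
qed

lemma pfrac_ppow: "pfrac e (of_nat p ^ k)"
  using pfrac_of_int[of e "int p ^ k"] by simp

lemma pfrac_inverse_ppow: "pfrac n (1 / of_nat p ^ n)"
  unfolding pfrac_def using ppow_pos[of n] by simp

lemma pfrac_finite_bound:
  "finite F \<Longrightarrow> (\<And>x. x \<in> F \<Longrightarrow> \<exists>e. pfrac e (g x)) \<Longrightarrow> \<exists>e. \<forall>x\<in>F. pfrac e (g x)"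
proof (induction F rule: finite_induct)
  case (insert a F)
  then obtain e1 e2 where "\<forall>x\<in>F. pfrac e1 (g x)" "pfrac e2 (g a)" by blast
  then have "\<forall>x\<in>insert a F. pfrac (max e1 e2) (g x)" using pfrac_mono by auto
  then show ?case by blast
qed simp

lemma rmod_nonneg: "0 \<le> rmod r (of_nat p ^ n)"
  unfolding rmod_def using floor_divide_lower[OF ppow_pos[of n], of r] by simp

lemma rmod_less: "rmod r (of_nat p ^ n) < of_nat p ^ n"
  unfolding rmod_def using floor_divide_upper[OF ppow_pos[of n], of r] by (simp add: algebra_simps)

lemma pcong_rmod: "pcong n (rmod r (of_nat p ^ n)) r"
  unfolding pcong_def rmod_def using ppow_pos[of n] by simp

lemma pcong_rmod': "pcong n r (rmod r (of_nat p ^ n))"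
  using pcong_rmod pcong_sym by blast

lemma pcong_residues_eq:
  assumes "pcong n u v" "0 \<le> u" "u < of_nat p ^ n" "0 \<le> v" "v < of_nat p ^ n"
  shows "u = v"
proof -
  obtain z :: int where z: "(u - v) / of_nat p ^ n = of_int z"
    using assms(1) unfolding pcong_def by (auto elim: Ints_cases)
  have "\<bar>(u - v) / of_nat p ^ n\<bar> < 1"
    using assms(2-) ppow_pos[of n] by (simp add: abs_less_iff field_simps)
  then have "z = 0" using z by linarith
  then show ?thesis using z ppow_pos[of n] by simp
qed

lemma rmod_pcong_eq: "pcong n r s \<Longrightarrow> rmod r (of_nat p ^ n) = rmod s (of_nat p ^ n)"
  by (meson pcong_rmod pcong_rmod' pcong_trans pcong_residues_eq rmod_nonneg rmod_less)

lemma rmod_eq_self: "0 \<le> r \<Longrightarrow> r < of_nat p ^ n \<Longrightarrow> rmod r (of_nat p ^ n) = r"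
  by (meson pcong_rmod pcong_residues_eq rmod_nonneg rmod_less)

lemma rmod_eq_0: "pcong n r 0 \<Longrightarrow> rmod r (of_nat p ^ n) = 0"
  using rmod_pcong_eq rmod_eq_self[of 0 n] ppow_pos[of n] by simp

lemma pfrac_rmod: "pfrac e r \<Longrightarrow> pfrac e (rmod r (of_nat p ^ n))"
  using pfrac_pcong pcong_rmod' by blast

lemma pfrac_iff_den_dvd: "pfrac e r \<longleftrightarrow> den r dvd int p ^ e"
  using of_int_mult_in_Ints_iff[of "int p ^ e" r] by (simp add: pfrac_def)

lemma den_ppow: "pfrac e r \<Longrightarrow> \<exists>j\<le>e. den r = int p ^ j"
proof -
  assume "pfrac e r"
  then have "nat (den r) dvd p ^ e"
    using den_pos[of r] pfrac_iff_den_dvd by (metis int_dvd_int_iff int_nat_eq less_le_not_le of_nat_power)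
  then obtain j where "j \<le> e" "nat (den r) = p ^ j"
    using divides_primepow_nat[OF prime_p] by blast
  then show ?thesis using den_pos[of r] by (metis int_nat_eq less_le_not_le of_nat_power)
qed

text \<open>The scalar multiplication of Q_p shifts the level by the denominator p^j of y 0 itself,
  which suffices because j < p^j.\<close>
lemma pfrac_den: "pfrac e r \<Longrightarrow> pfrac (nat (den r)) r"
proof -
  assume "pfrac e r"
  then obtain j where j: "den r = int p ^ j" using den_ppow by blast
  have "j < 2 ^ j" by (rule less_exp)
  also have "(2::nat) ^ j \<le> p ^ j" using p_ge_2 by (simp add: power_mono)
  finally have "int p ^ j dvd int p ^ nat (den r)"
    using j by (simp add: nat_power_eq le_imp_power_dvd)
  then show ?thesis using j pfrac_iff_den_dvd by simp
qed

lemma den_add_le: "pfrac e r \<Longrightarrow> pfrac e s \<Longrightarrow> den (r + s) \<le> max (den r) (den s)"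
proof -
  assume "pfrac e r" "pfrac e s"
  then obtain i j where ij: "den r = int p ^ i" "den s = int p ^ j" using den_ppow by blast
  then have "pfrac (max i j) r" "pfrac (max i j) s"
    using pfrac_iff_den_dvd by (simp_all add: le_imp_power_dvd)
  then have "den (r + s) dvd int p ^ max i j" using pfrac_add pfrac_iff_den_dvd by blast
  then have "den (r + s) \<le> int p ^ max i j" by (simp add: zdvd_imp_le)
  also have "\<dots> = max (den r) (den s)" using ij p_ge_2 by (simp add: max_def power_increasing_iff)
  finally show ?thesis .
qed

abbreviation Qp :: "(nat \<Rightarrow> rat) set" where
  "Qp \<equiv> padic_set p"

lemma pfrac_iff_ppow_denom: "(\<exists>(a::int) (k::nat). r = of_int a / of_nat p ^ k) \<longleftrightarrow> (\<exists>e. pfrac e r)"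
proof
  assume "\<exists>(a::int) (k::nat). r = of_int a / of_nat p ^ k"
  then obtain a k where "r = of_int a / of_nat p ^ k" by blast
  then have "of_nat p ^ k * r = of_int a" by simp
  then show "\<exists>e. pfrac e r" unfolding pfrac_def by (metis Ints_of_int)
next
  assume "\<exists>e. pfrac e r"
  then obtain e z where "of_nat p ^ e * r = of_int z" unfolding pfrac_def by (auto elim: Ints_cases)
  then have "r = of_int z / of_nat p ^ e" by (simp add: field_simps)
  then show "\<exists>(a::int) (k::nat). r = of_int a / of_nat p ^ k" by blast
qed

lemma padic_setD:
  assumes "x \<in> Qp"
  shows "0 \<le> x n" "x n < of_nat p ^ n" "\<exists>e. pfrac e (x n)" "pcong n (x (Suc n)) (x n)"
proof -
  from assms obtain z :: int where "x (Suc n) - x n = of_int z * of_nat p ^ n"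
    unfolding padic_set_def by blast
  then show "pcong n (x (Suc n)) (x n)" unfolding pcong_def by simp
qed (use assms in \<open>auto simp: padic_set_def simp flip: pfrac_iff_ppow_denom\<close>)

lemma padic_setI:
  assumes "\<And>n. \<exists>e. pfrac e (x n)" "\<And>n. 0 \<le> x n" "\<And>n. x n < of_nat p ^ n"
    "\<And>n. pcong n (x (Suc n)) (x n)"
  shows "x \<in> Qp"
proof -
  have "\<exists>z::int. x (Suc n) - x n = of_int z * of_nat p ^ n" for n
  proof -
    obtain z where "(x (Suc n) - x n) / of_nat p ^ n = of_int z"
      using assms(4)[of n] unfolding pcong_def by (auto elim: Ints_cases)
    then show ?thesis by (metis nonzero_eq_divide_eq ppow_pos less_irrefl)
  qed
  then show ?thesis
    using assms(1-3) unfolding padic_set_def by (simp flip: pfrac_iff_ppow_denom)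
qed

lemma padic_pcong: "x \<in> Qp \<Longrightarrow> n \<le> m \<Longrightarrow> pcong n (x m) (x n)"
proof (induction m)
  case (Suc m)
  show ?case
  proof (cases "n = Suc m")
    case False
    then have "n \<le> m" using Suc.prems by simp
    then show ?thesis using Suc padic_setD(4)[of x m] pcong_mono pcong_trans by blast
  qed simp
qed simp

lemma padic_level_rmod: "x \<in> Qp \<Longrightarrow> m \<le> n \<Longrightarrow> x m = rmod (x n) (of_nat p ^ m)"
  by (metis pcong_rmod pcong_trans padic_setD(1,2) padic_pcong pcong_residues_eq rmod_nonneg rmod_less)

lemma padic_eq_below: "x \<in> Qp \<Longrightarrow> y \<in> Qp \<Longrightarrow> x n = y n \<Longrightarrow> m \<le> n \<Longrightarrow> x m = y m"
  using padic_level_rmod by metis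

lemma padic_pfrac: "x \<in> Qp \<Longrightarrow> pfrac e (x 0) \<Longrightarrow> pfrac e (x n)"
  using padic_pcong[of x 0 n] pfrac_pcong pcong_sym by blast

lemma padic_pfrac_ex: "x \<in> Qp \<Longrightarrow> \<exists>e. pfrac e (x n)"
  using padic_setD(3) by blast

lemma Zp_subset: "Zp p \<subseteq> Qp"
  unfolding Zp_def by blast

lemma Zp_iff_pfrac: "x \<in> Qp \<Longrightarrow> x \<in> Zp p \<longleftrightarrow> pfrac 0 (x 0)"
  unfolding Zp_def pfrac_def using pcong_residues_eq[of 0 "x 0" 0] padic_setD(1,2)[of x 0]
  by (auto simp: pcong_def)

lemma Zp_pfrac: "x \<in> Zp p \<Longrightarrow> pfrac 0 (x n)"
  using Zp_iff_pfrac padic_pfrac Zp_subset by blast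

definition padic_of_rat :: "rat \<Rightarrow> nat \<Rightarrow> rat" where
  "padic_of_rat r = (\<lambda>n. rmod r (of_nat p ^ n))"

lemma padic_of_rat_in_Qp: "pfrac e r \<Longrightarrow> padic_of_rat r \<in> Qp"
proof (rule padic_setI)
  fix n
  assume "pfrac e r"
  then show "\<exists>e. pfrac e (padic_of_rat r n)" unfolding padic_of_rat_def using pfrac_rmod by blast
  show "0 \<le> padic_of_rat r n" "padic_of_rat r n < of_nat p ^ n"
    unfolding padic_of_rat_def by (rule rmod_nonneg, rule rmod_less)
  have "pcong n (padic_of_rat r (Suc n)) r"
    unfolding padic_of_rat_def using pcong_rmod pcong_mono le_SucI by blast
  then show "pcong n (padic_of_rat r (Suc n)) (padic_of_rat r n)"
    unfolding padic_of_rat_def using pcong_rmod' pcong_trans by blast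
qed

lemma padic_of_rat_in_Zp: "pfrac 0 r \<Longrightarrow> padic_of_rat r \<in> Zp p"
  using padic_of_rat_in_Qp Zp_iff_pfrac pfrac_rmod unfolding padic_of_rat_def by blast

lemma padic_zero_eq: "padic_zero = padic_of_rat 0"
  unfolding padic_zero_def padic_of_rat_def by simp

lemma padic_one_eq: "padic_one p = padic_of_rat 1"
  unfolding padic_one_def padic_of_rat_def by simp

lemma padic_zero_in_Zp: "padic_zero \<in> Zp p"
  by (simp add: padic_zero_eq padic_of_rat_in_Zp)

lemma padic_one_in_Zp: "padic_one p \<in> Zp p"
  using padic_of_rat_in_Zp[of 1] by (simp add: padic_one_eq pfrac_def)

section \<open>The p-adic metric\<close>

lemma padic_diff_level: "padic_add p x (padic_neg p y) n = rmod (x n - y n) (of_nat p ^ n)"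
proof -
  have "pcong n (x n + rmod (- y n) (of_nat p ^ n)) (x n + - y n)"
    by (intro pcong_add pcong_refl pcong_rmod)
  then show ?thesis
    unfolding padic_add_def padic_neg_def using rmod_pcong_eq by simp
qed

lemma padic_diff_eq_0_iff_pcong: "padic_add p x (padic_neg p y) n = 0 \<longleftrightarrow> pcong n (x n) (y n)"
proof -
  have "rmod (x n - y n) (of_nat p ^ n) = 0 \<longleftrightarrow> pcong n (x n - y n) 0"
    using pcong_rmod'[of n "x n - y n"] rmod_eq_0 by auto
  then show ?thesis
    unfolding padic_diff_level by (simp add: pcong_def)
qed

lemma padic_diff_eq_0_iff:
  assumes "x \<in> Qp" "y \<in> Qp"
  shows "padic_add p x (padic_neg p y) n = 0 \<longleftrightarrow> x n = y n"
  unfolding padic_diff_eq_0_iff_pcong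
  using pcong_residues_eq padic_setD(1,2) assms by (metis pcong_refl)

lemma den_padic_diff_0: "den (padic_add p x (padic_neg p y) 0) = den (x 0 - y 0)"
proof -
  have "padic_add p x (padic_neg p y) 0 = (x 0 - y 0) + of_int (- floor (x 0 - y 0))"
    unfolding padic_diff_level rmod_def by simp
  then show ?thesis by (simp only: den_add_of_int)
qed

lemma padic_dist_eq_0: "padic_dist p x x = 0"
  unfolding padic_dist_def padic_abs_def padic_diff_level rmod_def by simp

lemma padic_dist_unit_part:
  assumes "x \<in> Qp" "y \<in> Qp" "x 0 \<noteq> y 0"
  shows "padic_dist p x y = real_of_int (den (x 0 - y 0))"
  using assms padic_diff_eq_0_iff[OF assms(1,2), of 0] den_padic_diff_0[of x y]
  unfolding padic_dist_def padic_abs_def den_def by auto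

lemma padic_dist_first_difference:
  assumes "x \<in> Qp" "y \<in> Qp" "x L = y L" "x (Suc L) \<noteq> y (Suc L)"
  shows "padic_dist p x y = 1 / real p ^ L"
proof -
  let ?w = "padic_add p x (padic_neg p y)"
  have w: "?w n = 0 \<longleftrightarrow> x n = y n" for n
    using padic_diff_eq_0_iff assms(1,2) by blast
  have "(LEAST k. ?w (Suc k) \<noteq> 0) = L"
  proof (rule Least_equality)
    show "\<And>k. ?w (Suc k) \<noteq> 0 \<Longrightarrow> L \<le> k"
      using assms padic_eq_below w by (metis not_less_eq_eq)
  qed (use assms(4) w in simp)
  moreover have "?w 0 = 0" "?w (Suc L) \<noteq> 0"
    using w padic_eq_below[OF assms(1-3)] assms(4) by auto
  ultimately show ?thesis
    unfolding padic_dist_def padic_abs_def by (auto simp: powr_minus_divide powr_realpow)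
qed

lemma padic_first_difference:
  assumes "x \<noteq> y" "x 0 = y 0"
  obtains L where "x L = y L" "x (Suc L) \<noteq> y (Suc L)"
proof -
  have ex: "\<exists>n. x n \<noteq> y n" using assms(1) by auto
  define n where "n = (LEAST n. x n \<noteq> y n)"
  have "x n \<noteq> y n" unfolding n_def using ex by (rule LeastI_ex)
  then obtain L where "n = Suc L" using assms(2) by (cases n) auto
  moreover have "x L = y L" using not_less_Least[of L "\<lambda>n. x n \<noteq> y n"] \<open>n = Suc L\<close> n_def by auto
  ultimately show thesis using that \<open>x n \<noteq> y n\<close> by blast
qed

lemma padic_dist_gt_1:
  assumes "x \<in> Qp" "y \<in> Qp" "x 0 \<noteq> y 0"
  shows "1 < padic_dist p x y"
proof -
  have "den (x 0 - y 0) \<noteq> 1"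
  proof
    assume "den (x 0 - y 0) = 1"
    then have "pcong 0 (x 0) (y 0)" by (simp add: den_eq_1_iff pcong_def)
    then show False using pcong_residues_eq padic_setD(1,2) assms by metis
  qed
  then show ?thesis using den_pos[of "x 0 - y 0"] padic_dist_unit_part[OF assms] by simp
qed

lemma padic_dist_le_iff:
  assumes "x \<in> Qp" "y \<in> Qp"
  shows "padic_dist p x y \<le> 1 / real p ^ N \<longleftrightarrow> x N = y N"
proof (cases "x = y")
  case False
  show ?thesis
  proof (cases "x 0 = y 0")
    case True
    then obtain L where L: "x L = y L" "x (Suc L) \<noteq> y (Suc L)"
      using padic_first_difference False by blast
    have "N \<le> L \<longleftrightarrow> x N = y N"
      using L padic_eq_below[OF assms] by (metis not_less_eq_eq)
    moreover have "1 / real p ^ L \<le> 1 / real p ^ N \<longleftrightarrow> real p ^ N \<le> real p ^ L"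
      by (simp add: field_simps)
    moreover have "real p ^ N \<le> real p ^ L \<longleftrightarrow> N \<le> L"
      using p_ge_2 by (simp add: power_increasing_iff)
    ultimately show ?thesis using padic_dist_first_difference[OF assms L] by simp
  next
    case False
    have "1 / real p ^ N \<le> 1" using p_ge_2 by simp
    then have "\<not> padic_dist p x y \<le> 1 / real p ^ N"
      using padic_dist_gt_1[OF assms False] by linarith
    moreover have "x N \<noteq> y N"
      using padic_eq_below[OF assms, of N 0] False by auto
    ultimately show ?thesis by blast
  qed
qed (simp add: padic_dist_eq_0)

lemma padic_dist_ultrametric:
  assumes xyz: "x \<in> Qp" "y \<in> Qp" "z \<in> Qp" and "x 0 = y 0" "y 0 = z 0"
  shows "padic_dist p x z \<le> max (padic_dist p x y) (padic_dist p y z)"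
proof (cases "x = y \<or> y = z")
  case False
  then obtain L1 L2 where L: "x L1 = y L1" "x (Suc L1) \<noteq> y (Suc L1)" "y L2 = z L2" "y (Suc L2) \<noteq> z (Suc L2)"
    using assms padic_first_difference by metis
  define N where "N = min L1 L2"
  have "x N = y N" "y N = z N"
    using L padic_eq_below xyz unfolding N_def by (metis min.cobounded1 min.cobounded2)+
  then have "padic_dist p x z \<le> 1 / real p ^ N"
    using padic_dist_le_iff[OF xyz(1,3)] by simp
  moreover have "1 / real p ^ N = padic_dist p x y \<or> 1 / real p ^ N = padic_dist p y z"
    using padic_dist_first_difference L xyz unfolding N_def min_def by auto
  ultimately show ?thesis by linarith
qed (auto simp: padic_dist_eq_0)

lemma padic_dist_commute: "padic_dist p x y = padic_dist p y x"
proof -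
  let ?w = "padic_add p x (padic_neg p y)" and ?w' = "padic_add p y (padic_neg p x)"
  have "?w n = 0 \<longleftrightarrow> ?w' n = 0" for n
    unfolding padic_diff_eq_0_iff_pcong using pcong_sym by blast
  moreover have "den (?w 0) = den (?w' 0)"
    unfolding den_padic_diff_0 using den_minus[of "x 0 - y 0"] by simp
  ultimately show ?thesis
    unfolding padic_dist_def padic_abs_def by (simp add: den_def)
qed

lemma padic_dist_nonneg: "0 \<le> padic_dist p x y"
  unfolding padic_dist_def padic_abs_def
  using quotient_of_denom_pos'[of "padic_add p x (padic_neg p y) 0"] by simp

lemma padic_dist_pos:
  assumes "x \<in> Qp" "y \<in> Qp" "x \<noteq> y"
  shows "0 < padic_dist p x y"
proof (cases "x 0 = y 0")
  case True
  then obtain L where "x L = y L" "x (Suc L) \<noteq> y (Suc L)"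
    using padic_first_difference assms(3) by blast
  then show ?thesis using padic_dist_first_difference assms(1,2) by simp
next
  case False
  then show ?thesis using padic_dist_gt_1 assms(1,2) by fastforce
qed

lemma padic_dist_triangle_units:
  assumes xyz: "x \<in> Qp" "y \<in> Qp" "z \<in> Qp" and "x 0 \<noteq> y 0" "y 0 \<noteq> z 0" "x 0 \<noteq> z 0"
  shows "padic_dist p x z \<le> padic_dist p x y + padic_dist p y z"
proof -
  obtain e where "\<forall>u\<in>{x, y, z}. pfrac e (u 0)"
    using pfrac_finite_bound[of "{x, y, z}" "\<lambda>u. u 0"] padic_pfrac_ex xyz by blast
  then have "pfrac e (x 0 - y 0)" "pfrac e (y 0 - z 0)"
    by (auto intro: pfrac_diff)
  then have "den (x 0 - y 0 + (y 0 - z 0)) \<le> max (den (x 0 - y 0)) (den (y 0 - z 0))"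
    by (rule den_add_le)
  then have "den (x 0 - z 0) \<le> den (x 0 - y 0) + den (y 0 - z 0)"
    using den_pos[of "x 0 - y 0"] den_pos[of "y 0 - z 0"] by simp
  then show ?thesis
    using assms padic_dist_unit_part by simp
qed

lemma padic_dist_triangle:
  assumes xyz: "x \<in> Qp" "y \<in> Qp" "z \<in> Qp"
  shows "padic_dist p x z \<le> padic_dist p x y + padic_dist p y z"
proof (cases "x 0 = z 0")
  case xz: True
  show ?thesis
  proof (cases "x 0 = y 0")
    case True
    then have "padic_dist p x z \<le> max (padic_dist p x y) (padic_dist p y z)"
      using xz by (intro padic_dist_ultrametric[OF xyz]) simp_all
    then have "padic_dist p x z \<le> padic_dist p x y \<or> padic_dist p x z \<le> padic_dist p y z"
      by (simp add: le_max_iff_disj)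
    then show ?thesis using padic_dist_nonneg[of x y] padic_dist_nonneg[of y z] by linarith
  next
    case False
    have "padic_dist p x z \<le> 1 / real p ^ 0"
      using padic_dist_le_iff[OF xyz(1,3)] xz by blast
    then show ?thesis
      using padic_dist_gt_1[OF xyz(1,2) False] padic_dist_nonneg[of y z] by simp
  qed
next
  case False
  have dxz: "padic_dist p x z = real_of_int (den (x 0 - z 0))"
    using padic_dist_unit_part[OF xyz(1,3) False] .
  consider "x 0 = y 0" | "y 0 = z 0" | "x 0 \<noteq> y 0" "y 0 \<noteq> z 0" by blast
  then show ?thesis
  proof cases
    case 1
    then have "padic_dist p x z = padic_dist p y z"
      using dxz padic_dist_unit_part[OF xyz(2,3)] False by simp
    then show ?thesis using padic_dist_nonneg[of x y] by linarith
  next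
    case 2
    then have "padic_dist p x z = padic_dist p x y"
      using dxz padic_dist_unit_part[OF xyz(1,2)] False by simp
    then show ?thesis using padic_dist_nonneg[of y z] by linarith
  next
    case 3
    show ?thesis by (rule padic_dist_triangle_units[OF xyz 3 False])
  qed
qed

end

sublocale padic \<subseteq> padic_metric: Metric_space "padic_set p" "padic_dist p"
proof
  fix x y z
  show "0 \<le> padic_dist p x y" by (rule padic_dist_nonneg)
  show "padic_dist p x y = padic_dist p y x" by (rule padic_dist_commute)
  show "x \<in> padic_set p \<Longrightarrow> y \<in> padic_set p \<Longrightarrow> padic_dist p x y = 0 \<longleftrightarrow> x = y"
    using padic_dist_pos padic_dist_eq_0 by force
  show "x \<in> padic_set p \<Longrightarrow> y \<in> padic_set p \<Longrightarrow> z \<in> padic_set p \<Longrightarrow>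
      padic_dist p x z \<le> padic_dist p x y + padic_dist p y z"
    by (rule padic_dist_triangle)
qed

context padic
begin

lemma openin_padic_top:
  "openin (padic_top p) U \<longleftrightarrow> U \<subseteq> Qp \<and> (\<forall>x\<in>U. \<exists>N. {y \<in> Qp. y N = x N} \<subseteq> U)"
  unfolding padic_top_def padic_metric.openin_mtopology
proof (intro iffI conjI ballI allI impI)
  assume U: "U \<subseteq> Qp \<and> (\<forall>x. x \<in> U \<longrightarrow> (\<exists>r>0. padic_metric.mball x r \<subseteq> U))"
  then show "U \<subseteq> Qp" by blast
  fix x assume "x \<in> U"
  then obtain r where r: "r > 0" "padic_metric.mball x r \<subseteq> U" using U by blast
  then obtain N where N: "1 / real p ^ N < r" using exists_inverse_ppow_less by blast
  have "{y \<in> Qp. y N = x N} \<subseteq> padic_metric.mball x r"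
  proof
    fix y assume "y \<in> {y \<in> Qp. y N = x N}"
    then have "y \<in> Qp" "y N = x N" by auto
    then have "padic_dist p x y \<le> 1 / real p ^ N"
      using padic_dist_le_iff \<open>x \<in> U\<close> U by auto
    then show "y \<in> padic_metric.mball x r" using N \<open>y \<in> Qp\<close> \<open>x \<in> U\<close> U by auto
  qed
  then show "\<exists>N. {y \<in> Qp. y N = x N} \<subseteq> U" using r(2) by blast
next
  assume U: "U \<subseteq> Qp \<and> (\<forall>x\<in>U. \<exists>N. {y \<in> Qp. y N = x N} \<subseteq> U)"
  then show "U \<subseteq> Qp" by blast
  fix x assume "x \<in> U"
  then obtain N where N: "{y \<in> Qp. y N = x N} \<subseteq> U" using U by blast
  have ball: "padic_metric.mball x (1 / real p ^ N) \<subseteq> {y \<in> Qp. y N = x N}"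
  proof
    fix y assume "y \<in> padic_metric.mball x (1 / real p ^ N)"
    then have "x \<in> Qp" "y \<in> Qp" "padic_dist p x y \<le> 1 / real p ^ N" by auto
    then show "y \<in> {y \<in> Qp. y N = x N}" using padic_dist_le_iff[of x y N] by simp
  qed
  show "\<exists>r>0. padic_metric.mball x r \<subseteq> U"
  proof (intro exI conjI)
    show "(0::real) < 1 / real p ^ N" by simp
    show "padic_metric.mball x (1 / real p ^ N) \<subseteq> U" using ball N by (rule subset_trans)
  qed
qed

section \<open>The topology \<tau> on Q_p(X)\<close>

lemma level_set_Zp: "x \<in> Zp p \<Longrightarrow> {y \<in> Qp. y N = x N} = {y \<in> Zp p. y N = x N}"
  using padic_eq_below[of _ x N 0] Zp_subset unfolding Zp_def by auto

lemma openin_Zp: "openin (padic_top p) (Zp p)"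
  unfolding openin_padic_top using level_set_Zp Zp_subset by blast

definition block_factor :: "'x set \<Rightarrow> 'x \<Rightarrow> (nat \<Rightarrow> rat) set" where
  "block_factor P i = (if i \<in> P then Qp else Zp p)"

definition block_factor_top :: "'x set \<Rightarrow> 'x \<Rightarrow> (nat \<Rightarrow> rat) topology" where
  "block_factor_top P i = (if i \<in> P then padic_top p else subtopology (padic_top p) (Zp p))"

definition block :: "'x set \<Rightarrow> ('x \<Rightarrow> nat \<Rightarrow> rat) set" where
  "block P = {\<xi>. \<forall>i. \<xi> i \<in> block_factor P i}"

definition cylinder :: "'x set \<Rightarrow> 'x set \<Rightarrow> nat \<Rightarrow> ('x \<Rightarrow> nat \<Rightarrow> rat) \<Rightarrow> ('x \<Rightarrow> nat \<Rightarrow> rat) set" where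
  "cylinder P H N \<xi> = {\<eta> \<in> block P. \<forall>j\<in>H. \<eta> j N = \<xi> j N}"

lemma block_factor_padic: "y \<in> block_factor P i \<Longrightarrow> y \<in> Qp"
  unfolding block_factor_def using Zp_subset by (auto split: if_splits)

lemma Zp_in_block_factor: "y \<in> Zp p \<Longrightarrow> y \<in> block_factor P i"
  unfolding block_factor_def using Zp_subset by auto

lemma block_factor_of_block: "\<xi> \<in> block P \<Longrightarrow> \<xi> i \<in> block_factor P i"
  unfolding block_def by simp

lemma block_padic: "\<xi> \<in> block P \<Longrightarrow> \<xi> i \<in> Qp"
  by (rule block_factor_padic[OF block_factor_of_block])

lemma block_Zp: "\<xi> \<in> block P \<Longrightarrow> i \<notin> P \<Longrightarrow> \<xi> i \<in> Zp p"
  using block_factor_of_block[of \<xi> P i] by (simp add: block_factor_def)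

lemma block_subset_QpX:
  assumes "finite P"
  shows "block P \<subseteq> QpX p"
proof
  fix \<xi> assume \<xi>: "\<xi> \<in> block P"
  have "{i. \<xi> i \<notin> Zp p} \<subseteq> P"
    by (intro subsetI, rule ccontr) (simp add: block_Zp[OF \<xi>])
  then have "finite {i. \<xi> i \<notin> Zp p}" using assms by (rule finite_subset)
  then show "\<xi> \<in> QpX p"
    unfolding QpX_def using block_padic[OF \<xi>] by simp
qed

lemma openin_block_factor_top:
  "openin (block_factor_top P i) V \<longleftrightarrow>
     V \<subseteq> block_factor P i \<and> (\<forall>x\<in>V. \<exists>N. {y \<in> block_factor P i. y N = x N} \<subseteq> V)"
proof (cases "i \<in> P")
  case True
  then show ?thesis
    by (simp add: block_factor_top_def block_factor_def openin_padic_top)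
next
  case False
  have "openin (subtopology (padic_top p) (Zp p)) V \<longleftrightarrow>
      V \<subseteq> Zp p \<and> (\<forall>x\<in>V. \<exists>N. {y \<in> Qp. y N = x N} \<subseteq> V)"
    unfolding openin_open_subtopology[OF openin_Zp] openin_padic_top using Zp_subset by blast
  also have "\<dots> \<longleftrightarrow> V \<subseteq> Zp p \<and> (\<forall>x\<in>V. \<exists>N. {y \<in> Zp p. y N = x N} \<subseteq> V)"
  proof (rule conj_cong[OF refl], rule ball_cong[OF refl])
    fix x assume "V \<subseteq> Zp p" "x \<in> V"
    then have "x \<in> Zp p" by blast
    then show "(\<exists>N. {y \<in> Qp. y N = x N} \<subseteq> V) \<longleftrightarrow> (\<exists>N. {y \<in> Zp p. y N = x N} \<subseteq> V)"
      using level_set_Zp by simp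
  qed
  finally show ?thesis
    unfolding block_factor_top_def block_factor_def using False by simp
qed

lemma topspace_block_factor_top: "topspace (block_factor_top P i) = block_factor P i"
  unfolding block_factor_top_def block_factor_def
  using Zp_subset padic_metric.topspace_mtopology by (simp add: padic_top_def Int_absorb1)

lemma block_top_eq: "block_top p P = product_topology (block_factor_top P) UNIV"
  unfolding block_top_def block_factor_top_def ..

lemma topspace_block_top: "topspace (block_top p P) = block P"
  unfolding block_top_eq topspace_product_topology topspace_block_factor_top block_def
    PiE_UNIV_domain by (auto simp: Pi_def)

lemma cylinder_eq_PiE:
  "cylinder P H N \<xi> =
     (\<Pi>\<^sub>E i\<in>UNIV. if i \<in> H then {y \<in> block_factor P i. y N = \<xi> i N} else block_factor P i)"
  unfolding cylinder_def block_def PiE_UNIV_domain by (auto simp: Pi_iff split: if_splits)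

lemma openin_level_set: "openin (block_factor_top P i) {y \<in> block_factor P i. y N = c}"
  unfolding openin_block_factor_top by (intro conjI ballI exI[of _ N]) auto

lemma openin_cylinder: "finite H \<Longrightarrow> openin (block_top p P) (cylinder P H N \<xi>)"
proof -
  have "openin (block_factor_top P i) (block_factor P i)" for i
    using openin_topspace[of "block_factor_top P i"] by (simp add: topspace_block_factor_top)
  then show "finite H \<Longrightarrow> openin (block_top p P) (cylinder P H N \<xi>)"
    unfolding cylinder_eq_PiE block_top_eq openin_PiE_gen topspace_block_factor_top
    by (auto simp: openin_level_set elim: finite_subset[rotated])
qed

lemma cylinder_in_box:
  assumes U: "finite {i \<in> UNIV. U i \<noteq> topspace (block_factor_top P i)}"
      "\<forall>i\<in>UNIV. openin (block_factor_top P i) (U i)"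
    and \<xi>: "\<xi> \<in> Pi\<^sub>E UNIV U"
  shows "\<exists>H N. finite H \<and> cylinder P H N \<xi> \<subseteq> Pi\<^sub>E UNIV U"
proof -
  define H where "H = {i. U i \<noteq> block_factor P i}"
  have "finite H" using U(1) unfolding H_def topspace_block_factor_top by simp
  have U_open: "openin (block_factor_top P i) (U i)" for i
    using U(2) by simp
  have \<xi>U: "\<xi> i \<in> U i" for i
    using \<xi> by (simp add: PiE_iff)
  have "\<forall>i\<in>H. \<exists>N. {y \<in> block_factor P i. y N = \<xi> i N} \<subseteq> U i"
    using U_open \<xi>U unfolding openin_block_factor_top by blast
  then have "\<exists>Nf. \<forall>i\<in>H. {y \<in> block_factor P i. y (Nf i) = \<xi> i (Nf i)} \<subseteq> U i"
    by (rule bchoice)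
  then obtain Nf where Nf: "\<forall>i\<in>H. {y \<in> block_factor P i. y (Nf i) = \<xi> i (Nf i)} \<subseteq> U i"
    by blast
  define N where "N = (\<Sum>i\<in>H. Nf i)"
  have "\<eta> i \<in> U i" if \<eta>: "\<eta> \<in> cylinder P H N \<xi>" for \<eta> i
  proof (cases "i \<in> H")
    case True
    have "\<xi> i \<in> block_factor P i"
      using subsetD[OF openin_subset[OF U_open] \<xi>U] unfolding topspace_block_factor_top .
    then have "\<xi> i \<in> Qp" by (rule block_factor_padic)
    have \<eta>i: "\<eta> i \<in> block_factor P i" "\<eta> i N = \<xi> i N"
      using \<eta> True unfolding cylinder_def block_def by auto
    then have "\<eta> i \<in> Qp" by (auto intro: block_factor_padic)
    have "Nf i \<le> N"
      unfolding N_def by (rule member_le_sum[OF True _ \<open>finite H\<close>]) simp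
    then have "\<eta> i (Nf i) = \<xi> i (Nf i)"
      by (rule padic_eq_below[OF \<open>\<eta> i \<in> Qp\<close> \<open>\<xi> i \<in> Qp\<close> \<eta>i(2)])
    then have "\<eta> i \<in> {y \<in> block_factor P i. y (Nf i) = \<xi> i (Nf i)}"
      using \<eta>i(1) by simp
    then show ?thesis using Nf True by (auto dest: bspec)
  next
    case False
    then show ?thesis using \<eta> unfolding H_def cylinder_def block_def by auto
  qed
  then have "cylinder P H N \<xi> \<subseteq> Pi\<^sub>E UNIV U"
    by (auto simp: PiE_UNIV_domain)
  then show ?thesis using \<open>finite H\<close> by blast
qed

lemma openin_block_top:
  "openin (block_top p P) W \<longleftrightarrow>
     W \<subseteq> block P \<and> (\<forall>\<xi>\<in>W. \<exists>H N. finite H \<and> cylinder P H N \<xi> \<subseteq> W)"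
proof
  assume W: "openin (block_top p P) W"
  show "W \<subseteq> block P \<and> (\<forall>\<xi>\<in>W. \<exists>H N. finite H \<and> cylinder P H N \<xi> \<subseteq> W)"
  proof (intro conjI ballI)
    show "W \<subseteq> block P" using openin_subset[OF W] by (simp add: topspace_block_top)
    fix \<xi> assume "\<xi> \<in> W"
    have "\<exists>U. finite {i \<in> UNIV. U i \<noteq> topspace (block_factor_top P i)} \<and>
        (\<forall>i\<in>UNIV. openin (block_factor_top P i) (U i)) \<and> \<xi> \<in> Pi\<^sub>E UNIV U \<and> Pi\<^sub>E UNIV U \<subseteq> W"
      using W unfolding block_top_eq openin_product_topology_alt by (rule bspec[OF _ \<open>\<xi> \<in> W\<close>])
    then show "\<exists>H N. finite H \<and> cylinder P H N \<xi> \<subseteq> W"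
    proof (elim exE conjE)
      fix U assume U: "finite {i \<in> UNIV. U i \<noteq> topspace (block_factor_top P i)}"
        "\<forall>i\<in>UNIV. openin (block_factor_top P i) (U i)" "\<xi> \<in> Pi\<^sub>E UNIV U" "Pi\<^sub>E UNIV U \<subseteq> W"
      have "\<exists>H N. finite H \<and> cylinder P H N \<xi> \<subseteq> Pi\<^sub>E UNIV U"
        using U(1-3) by (rule cylinder_in_box)
      then show "\<exists>H N. finite H \<and> cylinder P H N \<xi> \<subseteq> W"
        using U(4) by (meson subset_trans)
    qed
  qed
next
  assume W: "W \<subseteq> block P \<and> (\<forall>\<xi>\<in>W. \<exists>H N. finite H \<and> cylinder P H N \<xi> \<subseteq> W)"
  show "openin (block_top p P) W"
  proof (subst openin_subopen, intro ballI)
    fix \<xi> assume "\<xi> \<in> W"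
    then obtain H N where H: "finite H" "cylinder P H N \<xi> \<subseteq> W" using W by blast
    have "\<xi> \<in> block P" using \<open>\<xi> \<in> W\<close> W by auto
    show "\<exists>T. openin (block_top p P) T \<and> \<xi> \<in> T \<and> T \<subseteq> W"
    proof (intro exI conjI)
      show "openin (block_top p P) (cylinder P H N \<xi>)" using H(1) by (rule openin_cylinder)
      show "\<xi> \<in> cylinder P H N \<xi>" using \<open>\<xi> \<in> block P\<close> unfolding cylinder_def by simp
    qed (fact H(2))
  qed
qed

lemma tau_open_iff:
  "tau_open p A \<longleftrightarrow> A \<subseteq> QpX p \<and>
     (\<forall>P. finite P \<longrightarrow> (\<forall>\<xi>\<in>A \<inter> block P. \<exists>H N. finite H \<and> cylinder P H N \<xi> \<subseteq> A))"
proof -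
  have "cylinder P H N \<xi> \<subseteq> A \<inter> block P \<longleftrightarrow> cylinder P H N \<xi> \<subseteq> A" for P H N \<xi>
    unfolding cylinder_def by auto
  then show ?thesis
    unfolding tau_open_def topspace_block_top openin_block_top by simp
qed

lemma padic_add_level: "padic_add p x y n = rmod (x n + y n) (of_nat p ^ n)"
  unfolding padic_add_def ..

lemma padic_add_in_Qp:
  assumes x: "x \<in> Qp" and y: "y \<in> Qp"
  shows "padic_add p x y \<in> Qp"
proof (rule padic_setI)
  fix n
  obtain e where "\<forall>u\<in>{x, y}. pfrac e (u 0)"
    using pfrac_finite_bound[of "{x, y}" "\<lambda>u. u 0"] padic_pfrac_ex x y by blast
  then have "pfrac e (x n + y n)"
    using padic_pfrac x y by (auto intro: pfrac_add)
  then show "\<exists>e. pfrac e (padic_add p x y n)"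
    unfolding padic_add_level using pfrac_rmod by blast
  show "0 \<le> padic_add p x y n" "padic_add p x y n < of_nat p ^ n"
    unfolding padic_add_level by (rule rmod_nonneg, rule rmod_less)
  have "pcong n (padic_add p x y (Suc n)) (x (Suc n) + y (Suc n))"
    unfolding padic_add_level using pcong_rmod pcong_mono le_SucI by blast
  also have "pcong n (x (Suc n) + y (Suc n)) (x n + y n)"
    using padic_setD(4)[OF x] padic_setD(4)[OF y] by (rule pcong_add)
  also have "pcong n (x n + y n) (padic_add p x y n)"
    unfolding padic_add_level by (rule pcong_rmod')
  finally show "pcong n (padic_add p x y (Suc n)) (padic_add p x y n)" .
qed

lemma padic_smul_level: "padic_smul p c y n = rmod (c (n + nat (den (y 0))) * y n) (of_nat p ^ n)"
  unfolding padic_smul_def den_def ..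

lemma pcong_padic_smul:
  assumes y: "y \<in> Qp" and c: "c \<in> Zp p" and d: "pfrac d (y 0)"
    and m: "n + d \<le> m" and m': "n \<le> m'"
  shows "pcong n (padic_smul p c y n) (c m * y m')"
proof -
  define D where "D = nat (den (y 0))"
  define k where "k = min D d"
  have "pfrac k (y 0)" unfolding k_def D_def using pfrac_den[OF d] d by (simp add: min_def)
  then have yn: "pfrac k (y n)" using padic_pfrac y by blast
  have cQ: "c \<in> Qp" using c Zp_subset by blast
  define a where "a = min (n + D) m"
  have "pcong a (c (n + D)) (c m)"
    using padic_pcong[OF cQ, of a "n + D"] padic_pcong[OF cQ, of a m] pcong_sym pcong_trans
    unfolding a_def by (meson min.cobounded1 min.cobounded2)
  moreover have "n + k \<le> a" unfolding a_def k_def using m by simp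
  ultimately have "pcong n (y n * c (n + D)) (y n * c m)"
    using yn pcong_mult_left' by blast
  then have "pcong n (c (n + D) * y n) (c m * y n)"
    by (simp add: mult.commute)
  also have "pcong n (c m * y n) (c m * y m')"
    using padic_pcong[OF y m'] pcong_sym Zp_pfrac[OF c] pcong_mult_left[of n 0] by simp
  finally show ?thesis
    unfolding padic_smul_level D_def[symmetric] using pcong_rmod pcong_trans by blast
qed

lemma padic_smul_in_Qp:
  assumes c: "c \<in> Zp p" and y: "y \<in> Qp"
  shows "padic_smul p c y \<in> Qp"
proof (rule padic_setI)
  obtain e where e: "pfrac e (y 0)" using padic_pfrac_ex y by blast
  fix n
  have "pfrac (0 + e) (c (n + nat (den (y 0))) * y n)"
    using Zp_pfrac[OF c] padic_pfrac[OF y e] by (rule pfrac_mult)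
  then show "\<exists>e. pfrac e (padic_smul p c y n)"
    unfolding padic_smul_level using pfrac_rmod by auto
  show "0 \<le> padic_smul p c y n" "padic_smul p c y n < of_nat p ^ n"
    unfolding padic_smul_level by (rule rmod_nonneg, rule rmod_less)
  have "pcong (Suc n) (padic_smul p c y (Suc n)) (c (Suc n + e) * y (Suc n))"
    using pcong_padic_smul[OF y c e] by simp
  then have "pcong n (padic_smul p c y (Suc n)) (c (Suc n + e) * y (Suc n))"
    using pcong_mono le_SucI by blast
  moreover have "pcong n (padic_smul p c y n) (c (Suc n + e) * y (Suc n))"
    using pcong_padic_smul[OF y c e] by simp
  ultimately show "pcong n (padic_smul p c y (Suc n)) (padic_smul p c y n)"
    using pcong_sym pcong_trans by blast
qed

lemma padic_smul_zero_left: "padic_smul p padic_zero y = padic_zero"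
  unfolding padic_smul_def padic_zero_def by simp

lemma padic_smul_zero_right: "padic_smul p c padic_zero = padic_zero"
  unfolding padic_smul_def padic_zero_def by simp

lemma padic_abs_le_iff:
  assumes "x \<in> Qp"
  shows "padic_abs p x \<le> 1 / real p ^ m \<longleftrightarrow> x m = 0"
proof -
  have "padic_add p x (padic_neg p padic_zero) = x"
    using rmod_eq_self padic_setD(1,2)[OF assms]
    by (simp add: fun_eq_iff padic_diff_level padic_zero_def)
  then have "padic_abs p x = padic_dist p x padic_zero"
    unfolding padic_dist_def by simp
  then show ?thesis
    using padic_dist_le_iff[OF assms padic_zero_in_Zp[THEN subsetD[OF Zp_subset]]]
    by (simp add: padic_zero_def)
qed

lemma padic_abs_gt_if_level_nonzero:
  assumes "x \<in> Qp" "x m \<noteq> 0"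
  shows "1 / real p ^ Suc m < padic_abs p x"
proof -
  have "x (Suc m) \<noteq> 0"
    using padic_level_rmod[OF assms(1), of m "Suc m"] assms(2) by auto
  then have "\<not> padic_abs p x \<le> 1 / real p ^ Suc m"
    using padic_abs_le_iff[OF assms(1)] by blast
  then show ?thesis by linarith
qed

section \<open>Matrices of bounded operators\<close>

definition admissible_matrix :: "('x \<Rightarrow> 'x \<Rightarrow> nat \<Rightarrow> rat) \<Rightarrow> bool" where
  "admissible_matrix M \<longleftrightarrow> (\<forall>i j. M i j \<in> Qp) \<and> finite {(i, j). M i j \<notin> Zp p}
     \<and> (\<forall>k. \<forall>\<epsilon>::real. \<epsilon> > 0 \<longrightarrow>
           finite {i. padic_abs p (M i k) > \<epsilon>} \<and> finite {j. padic_abs p (M k j) > \<epsilon>})"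

definition QpX_zero :: "'x \<Rightarrow> nat \<Rightarrow> rat" where
  "QpX_zero = (\<lambda>i. padic_zero)"

lemma QpX_zero_in_block: "QpX_zero \<in> block P"
  unfolding block_def QpX_zero_def by (simp add: Zp_in_block_factor[OF padic_zero_in_Zp])

lemma delta_in_block: "delta p j \<in> block P"
  unfolding block_def delta_def
  by (simp add: Zp_in_block_factor[OF padic_zero_in_Zp] Zp_in_block_factor[OF padic_one_in_Zp])

lemma QpX_zero_in_QpX: "QpX_zero \<in> QpX p"
  using block_subset_QpX[OF finite.emptyI] QpX_zero_in_block by (rule subsetD)

lemma delta_in_QpX: "delta p j \<in> QpX p"
  using block_subset_QpX[OF finite.emptyI] delta_in_block by (rule subsetD)

lemma Zp_linear_zero: "Zp_linear p A \<Longrightarrow> A QpX_zero = QpX_zero"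
proof -
  assume A: "Zp_linear p A"
  have zero: "QpX_smul p padic_zero \<xi> = QpX_zero" for \<xi> :: "'x \<Rightarrow> nat \<Rightarrow> rat"
    unfolding QpX_smul_def QpX_zero_def padic_smul_zero_left ..
  have "A (QpX_smul p padic_zero QpX_zero) = QpX_smul p padic_zero (A QpX_zero)"
    using A padic_zero_in_Zp QpX_zero_in_QpX unfolding Zp_linear_def by blast
  then show ?thesis unfolding zero .
qed

lemma tau_open_integral_vanishing:
  "tau_open p {\<eta> \<in> QpX p. (\<forall>i. \<eta> i \<in> Zp p) \<and> \<eta> k n = 0}" (is "tau_open p ?V")
  unfolding tau_open_iff
proof (intro conjI allI impI ballI)
  show "?V \<subseteq> QpX p" by blast
  fix P \<eta> assume P: "finite P" and \<eta>: "\<eta> \<in> ?V \<inter> block P"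
  have "cylinder P (insert k P) n \<eta> \<subseteq> ?V"
  proof
    fix \<xi> assume \<xi>: "\<xi> \<in> cylinder P (insert k P) n \<eta>"
    then have "\<xi> \<in> block P" "\<And>j. j \<in> insert k P \<Longrightarrow> \<xi> j n = \<eta> j n"
      unfolding cylinder_def by auto
    have "\<xi> i \<in> Zp p" for i
    proof (cases "i \<in> P")
      case True
      have "\<eta> i \<in> Zp p" using \<eta> by blast
      moreover have "\<xi> i 0 = \<eta> i 0"
        using padic_eq_below[OF block_padic[OF \<open>\<xi> \<in> block P\<close>] block_padic[of \<eta> P i]]
          \<eta> \<open>\<And>j. j \<in> insert k P \<Longrightarrow> \<xi> j n = \<eta> j n\<close> True by blast
      ultimately show ?thesis
        using block_padic[OF \<open>\<xi> \<in> block P\<close>] unfolding Zp_def by simp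
    next
      case False
      then show ?thesis using \<open>\<xi> \<in> block P\<close> by (rule block_Zp[rotated])
    qed
    moreover have "\<xi> k n = 0" using \<eta> \<open>\<And>j. j \<in> insert k P \<Longrightarrow> \<xi> j n = \<eta> j n\<close> by simp
    moreover have "\<xi> \<in> QpX p" using block_subset_QpX[OF P] \<open>\<xi> \<in> block P\<close> by blast
    ultimately show "\<xi> \<in> ?V" by blast
  qed
  then show "\<exists>H N. finite H \<and> cylinder P H N \<eta> \<subseteq> ?V"
    using P by (intro exI conjI) simp_all
qed

text \<open>Continuity at 0, seen in the block Z_p^X: \<delta>_j lies in every cylinder around 0 that
  does not constrain the coordinate j.\<close>
lemma bounded_op_columns_eventually_small:
  assumes A: "A \<in> bounded_ops p"
  obtains H where "finite H" "\<And>j i. j \<notin> H \<Longrightarrow> A (delta p j) i \<in> Zp p"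
    "\<And>j. j \<notin> H \<Longrightarrow> A (delta p j) k n = 0"
proof -
  define V where "V = {\<eta> \<in> QpX p. (\<forall>i. \<eta> i \<in> Zp p) \<and> \<eta> k n = 0}"
  define W where "W = {\<xi> \<in> QpX p. A \<xi> \<in> V}"
  have L: "Zp_linear p A" and C: "tau_continuous p A"
    using A unfolding bounded_ops_def by auto
  have "tau_open p V"
    unfolding V_def by (rule tau_open_integral_vanishing)
  then have "tau_open p W"
    using C unfolding tau_continuous_def W_def by simp
  then have W_open: "\<forall>\<xi>\<in>W \<inter> block {}. \<exists>H N. finite H \<and> cylinder {} H N \<xi> \<subseteq> W"
    unfolding tau_open_iff by simp
  have "A QpX_zero \<in> V"
    unfolding Zp_linear_zero[OF L] V_def
    using QpX_zero_in_QpX padic_zero_in_Zp by (simp add: QpX_zero_def padic_zero_def)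
  then have "QpX_zero \<in> W \<inter> block {}"
    unfolding W_def by (simp add: QpX_zero_in_QpX QpX_zero_in_block)
  with W_open obtain H N where H: "finite H" "cylinder {} H N QpX_zero \<subseteq> W"
    by (meson bspec)
  have "A (delta p j) \<in> V" if "j \<notin> H" for j
  proof -
    have "\<forall>i\<in>H. delta p j i N = QpX_zero i N"
      using that by (auto simp: delta_def QpX_zero_def)
    then have "delta p j \<in> cylinder {} H N QpX_zero"
      unfolding cylinder_def by (simp add: delta_in_block)
    then have "delta p j \<in> W" using H(2) by (rule rev_subsetD)
    then show ?thesis unfolding W_def by simp
  qed
  then show thesis
    using that[OF H(1)] unfolding V_def by simp
qed

lemma bounded_op_column_in_QpX: "A \<in> bounded_ops p \<Longrightarrow> A (delta p j) \<in> QpX p"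
  unfolding bounded_ops_def Zp_linear_def by (simp add: delta_in_QpX)

lemma op_matrix_finite_nonintegral:
  assumes A: "A \<in> bounded_ops p"
  shows "finite {(i, j). op_matrix p A i j \<notin> Zp p}"
proof -
  obtain H where H: "finite H" and HZ: "\<And>j i. j \<notin> H \<Longrightarrow> A (delta p j) i \<in> Zp p"
    using bounded_op_columns_eventually_small[OF A, of undefined 0] by metis
  have col: "finite {i. A (delta p j) i \<notin> Zp p}" for j
    using bounded_op_column_in_QpX[OF A] unfolding QpX_def by simp
  have "{(i, j). op_matrix p A i j \<notin> Zp p} \<subseteq> (\<Union>j\<in>H. {i. A (delta p j) i \<notin> Zp p} \<times> {j})"
    unfolding op_matrix_def using HZ by auto
  moreover have "finite (\<Union>j\<in>H. {i. A (delta p j) i \<notin> Zp p} \<times> {j})"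
    using H col by simp
  ultimately show ?thesis by (rule finite_subset)
qed

lemma op_matrix_row_decay:
  assumes A: "A \<in> bounded_ops p" and "0 < \<epsilon>"
  shows "finite {j. \<epsilon> < padic_abs p (op_matrix p A k j)}"
proof -
  obtain n where n: "1 / real p ^ n < \<epsilon>" using exists_inverse_ppow_less \<open>0 < \<epsilon>\<close> by blast
  obtain H where H: "finite H" and HN: "\<And>j. j \<notin> H \<Longrightarrow> A (delta p j) k n = 0"
    using bounded_op_columns_eventually_small[OF A, of k n] by metis
  have "padic_abs p (op_matrix p A k j) \<le> 1 / real p ^ n" if "j \<notin> H" for j
  proof -
    have "A (delta p j) k \<in> Qp"
      using bounded_op_column_in_QpX[OF A] unfolding QpX_def by simp
    then show ?thesis unfolding op_matrix_def using padic_abs_le_iff HN[OF that] by simp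
  qed
  then have "{j. \<epsilon> < padic_abs p (op_matrix p A k j)} \<subseteq> H"
    using n by force
  then show ?thesis using H by (rule finite_subset)
qed

lemma padic_of_rat_level_eq_0: "padic_of_rat (of_nat p ^ n) n = 0"
  unfolding padic_of_rat_def using pcong_ppow_multiple by (rule rmod_eq_0)

lemma padic_smul_ppow_inverse_ppow:
  "padic_smul p (padic_of_rat (of_nat p ^ n)) (padic_of_rat (1 / of_nat p ^ n)) = padic_one p"
proof
  fix m
  let ?c = "padic_of_rat (of_nat p ^ n)" and ?y = "padic_of_rat (1 / of_nat p ^ n)"
  have c: "?c \<in> Zp p" using padic_of_rat_in_Zp pfrac_ppow by blast
  have y: "?y \<in> Qp" using padic_of_rat_in_Qp[OF pfrac_inverse_ppow] .
  have y0: "pfrac n (?y 0)" unfolding padic_of_rat_def using pfrac_rmod[OF pfrac_inverse_ppow] .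
  have "pcong m (padic_smul p ?c ?y m) (?c (m + n) * ?y m)"
    using pcong_padic_smul[OF y c y0] by simp
  also have "pcong m (?c (m + n) * ?y m) (of_nat p ^ n * ?y m)"
    using pcong_rmod[of "m + n" "of_nat p ^ n"] padic_pfrac[OF y y0]
    unfolding padic_of_rat_def by (rule pcong_mult_right') simp
  also have "pcong m (of_nat p ^ n * ?y m) (of_nat p ^ n * (1 / of_nat p ^ n))"
    using pcong_rmod[of m "1 / of_nat p ^ n"] pfrac_ppow
    unfolding padic_of_rat_def by (rule pcong_mult_left') simp
  also have "of_nat p ^ n * (1 / of_nat p ^ n) = (1::rat)"
    by simp
  also have "pcong m 1 (padic_one p m)"
    unfolding padic_one_def by (rule pcong_rmod')
  finally show "padic_smul p ?c ?y m = padic_one p m"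
    using pcong_residues_eq rmod_nonneg rmod_less unfolding padic_smul_level padic_one_def by blast
qed

lemma padic_smul_ppow_level:
  assumes "y \<in> Zp p"
  shows "padic_smul p (padic_of_rat (of_nat p ^ n)) y n = 0"
proof -
  have "y \<in> Qp" using assms Zp_subset by blast
  have "pcong n (padic_smul p (padic_of_rat (of_nat p ^ n)) y n) (padic_of_rat (of_nat p ^ n) n * y n)"
    using pcong_padic_smul[OF \<open>y \<in> Qp\<close> padic_of_rat_in_Zp[OF pfrac_ppow] Zp_iff_pfrac[THEN iffD1, OF \<open>y \<in> Qp\<close> assms]]
    by simp
  then have "pcong n (padic_smul p (padic_of_rat (of_nat p ^ n)) y n) 0"
    unfolding padic_of_rat_level_eq_0 by simp
  then show ?thesis
    unfolding padic_smul_level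
    by (rule pcong_residues_eq[OF _ rmod_nonneg rmod_less order_refl ppow_pos])
qed

text \<open>The k-th column is p^n times the image of p^(-n) \<delta>_k, so it vanishes modulo p^n wherever
  that image is integral.\<close>
lemma op_matrix_column_decay:
  assumes A: "A \<in> bounded_ops p" and "0 < \<epsilon>"
  shows "finite {i. \<epsilon> < padic_abs p (op_matrix p A i k)}"
proof -
  obtain n where n: "1 / real p ^ n < \<epsilon>" using exists_inverse_ppow_less \<open>0 < \<epsilon>\<close> by blast
  have L: "Zp_linear p A" using A unfolding bounded_ops_def by simp
  define c where "c = padic_of_rat (of_nat p ^ n)"
  define \<eta> where "\<eta> = (\<lambda>i. if i = k then padic_of_rat (1 / of_nat p ^ n) else padic_zero)"
  have c: "c \<in> Zp p" unfolding c_def using padic_of_rat_in_Zp pfrac_ppow by blast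
  have "{i. \<eta> i \<notin> Zp p} \<subseteq> {k}" unfolding \<eta>_def using padic_zero_in_Zp by auto
  then have \<eta>: "\<eta> \<in> QpX p"
    unfolding QpX_def \<eta>_def
    using padic_of_rat_in_Qp[OF pfrac_inverse_ppow] padic_zero_in_Zp Zp_subset
    by (auto intro: finite_subset)
  have "QpX_smul p c \<eta> = delta p k"
    unfolding QpX_smul_def \<eta>_def delta_def c_def
    using padic_smul_ppow_inverse_ppow padic_smul_zero_right by (intro ext) auto
  then have col: "A (delta p k) = QpX_smul p c (A \<eta>)"
    using L c \<eta> unfolding Zp_linear_def by metis
  have A\<eta>: "A \<eta> \<in> QpX p" using L \<eta> unfolding Zp_linear_def by blast
  have "padic_abs p (op_matrix p A i k) \<le> 1 / real p ^ n" if "A \<eta> i \<in> Zp p" for i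
  proof -
    have "op_matrix p A i k = padic_smul p c (A \<eta> i)"
      unfolding op_matrix_def col QpX_smul_def ..
    moreover have "padic_smul p c (A \<eta> i) \<in> Qp" "padic_smul p c (A \<eta> i) n = 0"
      using padic_smul_in_Qp[OF c] padic_smul_ppow_level that Zp_subset unfolding c_def by blast+
    ultimately show ?thesis using padic_abs_le_iff by simp
  qed
  then have "{i. \<epsilon> < padic_abs p (op_matrix p A i k)} \<subseteq> {i. A \<eta> i \<notin> Zp p}"
    using n by force
  moreover have "finite {i. A \<eta> i \<notin> Zp p}" using A\<eta> unfolding QpX_def by simp
  ultimately show ?thesis by (rule finite_subset)
qed

lemma op_matrix_admissible:
  assumes A: "A \<in> bounded_ops p"
  shows "admissible_matrix (op_matrix p A)"
proof -
  have "op_matrix p A i j \<in> Qp" for i j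
    using bounded_op_column_in_QpX[OF A, of j] unfolding QpX_def op_matrix_def by simp
  then show ?thesis
    unfolding admissible_matrix_def
    using op_matrix_finite_nonintegral[OF A] op_matrix_row_decay[OF A] op_matrix_column_decay[OF A]
    by simp
qed

section \<open>Operators of admissible matrices\<close>

definition row_support :: "('x \<Rightarrow> 'x \<Rightarrow> nat \<Rightarrow> rat) \<Rightarrow> 'x \<Rightarrow> nat \<Rightarrow> 'x set" where
  "row_support M i m = {j. M i j m \<noteq> 0}"

definition row_sum :: "('x \<Rightarrow> 'x \<Rightarrow> nat \<Rightarrow> rat) \<Rightarrow> ('x \<Rightarrow> nat \<Rightarrow> rat) \<Rightarrow> 'x \<Rightarrow> nat \<Rightarrow> rat" where
  "row_sum M \<xi> i m = (\<Sum>j\<in>row_support M i m. M i j m * \<xi> j m)"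

definition denom_bound :: "('x \<Rightarrow> 'x \<Rightarrow> nat \<Rightarrow> rat) \<Rightarrow> ('x \<Rightarrow> nat \<Rightarrow> rat) \<Rightarrow> nat \<Rightarrow> bool" where
  "denom_bound M \<xi> e \<longleftrightarrow> (\<forall>i j. pfrac e (M i j 0)) \<and> (\<forall>j. pfrac e (\<xi> j 0))"

text \<open>Once p^e clears all denominators, the residues of the products M_ij \<xi>_j modulo p^n are
  determined by the residues of the factors modulo p^(n+e), and only finitely many of those
  are nonzero in each row.\<close>
definition matrix_op :: "('x \<Rightarrow> 'x \<Rightarrow> nat \<Rightarrow> rat) \<Rightarrow> ('x \<Rightarrow> nat \<Rightarrow> rat) \<Rightarrow> 'x \<Rightarrow> nat \<Rightarrow> rat" where
  "matrix_op M \<xi> = (\<lambda>i n. rmod (row_sum M \<xi> i (n + (LEAST e. denom_bound M \<xi> e))) (of_nat p ^ n))"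

lemma admissible_padic: "admissible_matrix M \<Longrightarrow> M i j \<in> Qp"
  unfolding admissible_matrix_def by blast

lemma level_nonzero_subset:
  assumes "\<And>k. f k \<in> Qp"
  shows "{k. f k m \<noteq> 0} \<subseteq> {k. 1 / real p ^ Suc m < padic_abs p (f k)}"
  using padic_abs_gt_if_level_nonzero assms by blast

lemma finite_row_support: "admissible_matrix M \<Longrightarrow> finite (row_support M i m)"
  unfolding row_support_def
  using level_nonzero_subset[of "M i" m] admissible_padic
  by (auto simp: admissible_matrix_def intro: finite_subset)

lemma finite_column_support: "admissible_matrix M \<Longrightarrow> finite {i. M i j m \<noteq> 0}"
  using level_nonzero_subset[of "\<lambda>i. M i j" m] admissible_padic
  by (auto simp: admissible_matrix_def intro: finite_subset)

lemma pfrac_bound_almost_integral: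
  assumes "\<And>k. f k \<in> Qp" "finite {k. f k \<notin> Zp p}"
  shows "\<exists>e. \<forall>k. pfrac e (f k 0)"
proof -
  obtain e where e: "\<forall>k\<in>{k. f k \<notin> Zp p}. pfrac e (f k 0)"
    using pfrac_finite_bound[OF assms(2), of "\<lambda>k. f k 0"] padic_pfrac_ex[OF assms(1)] by blast
  have "pfrac e (f k 0)" for k
    using e Zp_pfrac[of "f k" 0] pfrac_mono[of 0 "f k 0" e] by (cases "f k \<in> Zp p") auto
  then show ?thesis by blast
qed

lemma denom_bound_exists:
  assumes M: "admissible_matrix M" and \<xi>: "\<xi> \<in> QpX p"
  shows "\<exists>e. denom_bound M \<xi> e"
proof -
  obtain e1 where "\<forall>ij. pfrac e1 (case_prod M ij 0)"
    using pfrac_bound_almost_integral[of "case_prod M"] M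
    unfolding admissible_matrix_def by (auto simp: case_prod_unfold)
  moreover obtain e2 where "\<forall>j. pfrac e2 (\<xi> j 0)"
    using pfrac_bound_almost_integral[of \<xi>] \<xi> unfolding QpX_def by auto
  ultimately have "denom_bound M \<xi> (max e1 e2)"
    unfolding denom_bound_def using pfrac_mono by (metis case_prod_conv max.cobounded1 max.cobounded2)
  then show ?thesis by blast
qed

lemma denom_bound_mono: "denom_bound M \<xi> e \<Longrightarrow> e \<le> e' \<Longrightarrow> denom_bound M \<xi> e'"
  unfolding denom_bound_def using pfrac_mono by blast

lemma row_support_mono:
  assumes M: "admissible_matrix M" and "m \<le> m'"
  shows "row_support M i m \<subseteq> row_support M i m'"
  unfolding row_support_def
  using padic_level_rmod[OF admissible_padic[OF M] \<open>m \<le> m'\<close>] by auto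

lemma pcong_row_sum:
  assumes M: "admissible_matrix M" and \<xi>: "\<And>j. \<xi> j \<in> Qp" and e: "denom_bound M \<xi> e"
    and m: "n + e \<le> m" and "m \<le> m'"
  shows "pcong n (row_sum M \<xi> i m') (row_sum M \<xi> i m)"
proof -
  have dM: "pfrac e (M i j k)" for j k
    using e padic_pfrac admissible_padic[OF M] unfolding denom_bound_def by blast
  have d\<xi>: "pfrac e (\<xi> j k)" for j k
    using e padic_pfrac \<xi> unfolding denom_bound_def by blast
  have "pcong n (M i j m' * \<xi> j m') (M i j m * \<xi> j m)" for j
  proof -
    have "pcong n (M i j m' * \<xi> j m') (M i j m * \<xi> j m')"
      using padic_pcong[OF admissible_padic[OF M] \<open>m \<le> m'\<close>] d\<xi> m by (rule pcong_mult_right')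
    also have "pcong n (M i j m * \<xi> j m') (M i j m * \<xi> j m)"
      using padic_pcong[OF \<xi> \<open>m \<le> m'\<close>] dM m by (rule pcong_mult_left')
    finally show ?thesis .
  qed
  then have "pcong n (row_sum M \<xi> i m') (\<Sum>j\<in>row_support M i m'. M i j m * \<xi> j m)"
    unfolding row_sum_def by (rule pcong_sum)
  also have "(\<Sum>j\<in>row_support M i m'. M i j m * \<xi> j m) = row_sum M \<xi> i m"
    unfolding row_sum_def
    by (rule sum.mono_neutral_right[OF finite_row_support[OF M] row_support_mono[OF M \<open>m \<le> m'\<close>]])
      (simp add: row_support_def)
  finally show ?thesis .
qed

lemma matrix_op_level:
  assumes M: "admissible_matrix M" and \<xi>: "\<And>j. \<xi> j \<in> Qp" and e: "denom_bound M \<xi> e"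
    and m: "n + e \<le> m"
  shows "matrix_op M \<xi> i n = rmod (row_sum M \<xi> i m) (of_nat p ^ n)"
proof -
  define E where "E = (LEAST e. denom_bound M \<xi> e)"
  have "denom_bound M \<xi> E" unfolding E_def using e by (rule LeastI)
  moreover have "n + E \<le> m" using Least_le[of "denom_bound M \<xi>", OF e] m unfolding E_def by simp
  ultimately have "pcong n (row_sum M \<xi> i m) (row_sum M \<xi> i (n + E))"
    using pcong_row_sum[OF M \<xi>] by simp
  then show ?thesis
    unfolding matrix_op_def E_def[symmetric] by (simp add: rmod_pcong_eq)
qed

lemma pfrac_row_sum:
  assumes M: "admissible_matrix M" and \<xi>: "\<And>j. \<xi> j \<in> Qp" and e: "denom_bound M \<xi> e"
  shows "pfrac (e + e) (row_sum M \<xi> i m)"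
  unfolding row_sum_def
proof (rule pfrac_sum)
  fix j
  have "pfrac e (M i j m)" "pfrac e (\<xi> j m)"
    using e padic_pfrac admissible_padic[OF M] \<xi> unfolding denom_bound_def by blast+
  then show "pfrac (e + e) (M i j m * \<xi> j m)" by (rule pfrac_mult)
qed

lemma pfrac_matrix_op:
  assumes M: "admissible_matrix M" and \<xi>: "\<And>j. \<xi> j \<in> Qp" and e: "denom_bound M \<xi> e"
  shows "pfrac (e + e) (matrix_op M \<xi> i n)"
  unfolding matrix_op_level[OF M \<xi> e order_refl] using pfrac_row_sum[OF M \<xi> e] by (rule pfrac_rmod)

lemma matrix_op_in_Qp:
  assumes M: "admissible_matrix M" and \<xi>: "\<And>j. \<xi> j \<in> Qp" and e: "denom_bound M \<xi> e"
  shows "matrix_op M \<xi> i \<in> Qp"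
proof (rule padic_setI)
  fix n
  have eq: "matrix_op M \<xi> i k = rmod (row_sum M \<xi> i (Suc n + e)) (of_nat p ^ k)" if "k \<le> Suc n" for k
    using matrix_op_level[OF M \<xi> e] that by simp
  show "\<exists>e. pfrac e (matrix_op M \<xi> i n)"
    using pfrac_matrix_op[OF M \<xi> e] by blast
  show "0 \<le> matrix_op M \<xi> i n" "matrix_op M \<xi> i n < of_nat p ^ n"
    unfolding eq[OF le_SucI[OF order_refl]] by (rule rmod_nonneg, rule rmod_less)
  have "pcong n (matrix_op M \<xi> i (Suc n)) (row_sum M \<xi> i (Suc n + e))"
    unfolding eq[OF order_refl] using pcong_rmod pcong_mono le_SucI by blast
  also have "pcong n (row_sum M \<xi> i (Suc n + e)) (matrix_op M \<xi> i n)"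
    unfolding eq[OF le_SucI[OF order_refl]] by (rule pcong_rmod')
  finally show "pcong n (matrix_op M \<xi> i (Suc n)) (matrix_op M \<xi> i n)" .
qed

lemma matrix_op_in_Zp:
  assumes M: "admissible_matrix M" and \<xi>: "\<And>j. \<xi> j \<in> Qp" and e: "denom_bound M \<xi> e"
    and row: "\<And>j. M i j \<in> Zp p" and col: "\<And>j. M i j e \<noteq> 0 \<Longrightarrow> \<xi> j \<in> Zp p"
  shows "matrix_op M \<xi> i \<in> Zp p"
proof -
  have "pfrac 0 (row_sum M \<xi> i e)"
    unfolding row_sum_def
  proof (rule pfrac_sum)
    fix j assume "j \<in> row_support M i e"
    then have "pfrac 0 (M i j e)" "pfrac 0 (\<xi> j e)"
      using Zp_pfrac row col unfolding row_support_def by auto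
    then show "pfrac 0 (M i j e * \<xi> j e)" using pfrac_mult by fastforce
  qed
  then have "pcong 0 (row_sum M \<xi> i e) 0"
    using pcong_0_iff_pfrac by simp
  then have "rmod (row_sum M \<xi> i e) (of_nat p ^ 0) = 0"
    by (rule rmod_eq_0)
  then have "matrix_op M \<xi> i 0 = 0"
    using matrix_op_level[OF M \<xi> e, of 0 e] by simp
  then show ?thesis
    using matrix_op_in_Qp[OF M \<xi> e] unfolding Zp_def by simp
qed

lemma matrix_op_in_QpX:
  assumes M: "admissible_matrix M" and \<xi>: "\<xi> \<in> QpX p"
  shows "matrix_op M \<xi> \<in> QpX p"
proof -
  obtain e where e: "denom_bound M \<xi> e" using denom_bound_exists[OF M \<xi>] by blast
  have \<xi>Q: "\<And>j. \<xi> j \<in> Qp" using \<xi> unfolding QpX_def by blast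
  define R where "R = fst ` {(i, j). M i j \<notin> Zp p}"
  define C where "C = (\<Union>j\<in>{j. \<xi> j \<notin> Zp p}. {i. M i j e \<noteq> 0})"
  have "finite R" unfolding R_def using M unfolding admissible_matrix_def by simp
  moreover have "finite C"
    unfolding C_def using \<xi> finite_column_support[OF M] unfolding QpX_def by blast
  moreover have "{i. matrix_op M \<xi> i \<notin> Zp p} \<subseteq> R \<union> C"
  proof (rule subsetI, rule ccontr)
    fix i assume i: "i \<in> {i. matrix_op M \<xi> i \<notin> Zp p}" and "i \<notin> R \<union> C"
    then have "M i j \<in> Zp p" "M i j e \<noteq> 0 \<Longrightarrow> \<xi> j \<in> Zp p" for j
      unfolding R_def C_def by (auto simp: image_iff)
    then show False using matrix_op_in_Zp[OF M \<xi>Q e] i by blast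
  qed
  ultimately have "finite {i. matrix_op M \<xi> i \<notin> Zp p}"
    using finite_subset by blast
  then show ?thesis
    unfolding QpX_def using matrix_op_in_Qp[OF M \<xi>Q e] by blast
qed

lemma pcong_row_sum_entries:
  assumes M: "admissible_matrix M" and e: "denom_bound M \<xi> e"
    and f: "\<And>j. pcong (n + e) (\<zeta> j (n + e)) (f j)"
  shows "pcong n (row_sum M \<zeta> i (n + e)) (\<Sum>j\<in>row_support M i (n + e). M i j (n + e) * f j)"
  unfolding row_sum_def
proof (rule pcong_sum)
  fix j
  have "pfrac e (M i j (n + e))"
    using e padic_pfrac admissible_padic[OF M] unfolding denom_bound_def by blast
  with f[of j] show "pcong n (M i j (n + e) * \<zeta> j (n + e)) (M i j (n + e) * f j)"
    by (rule pcong_mult_left)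
qed

lemma denom_bound_exists2:
  assumes "admissible_matrix M" "\<xi> \<in> QpX p" "\<eta> \<in> QpX p"
  obtains e where "denom_bound M \<xi> e" "denom_bound M \<eta> e"
proof -
  obtain e1 e2 where "denom_bound M \<xi> e1" "denom_bound M \<eta> e2"
    using denom_bound_exists assms by blast
  then show thesis
    using that[of "max e1 e2"] denom_bound_mono by (meson max.cobounded1 max.cobounded2)
qed

lemma matrix_op_add:
  assumes M: "admissible_matrix M" and \<xi>: "\<xi> \<in> QpX p" and \<eta>: "\<eta> \<in> QpX p"
  shows "matrix_op M (QpX_add p \<xi> \<eta>) = QpX_add p (matrix_op M \<xi>) (matrix_op M \<eta>)"
proof (intro ext)
  fix i n
  obtain e where e\<xi>: "denom_bound M \<xi> e" and e\<eta>: "denom_bound M \<eta> e"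
    using denom_bound_exists2[OF M \<xi> \<eta>] .
  define \<zeta> where "\<zeta> = QpX_add p \<xi> \<eta>"
  have \<xi>Q: "\<And>j. \<xi> j \<in> Qp" and \<eta>Q: "\<And>j. \<eta> j \<in> Qp"
    using \<xi> \<eta> unfolding QpX_def by blast+
  have \<zeta>j: "\<zeta> j = padic_add p (\<xi> j) (\<eta> j)" for j unfolding \<zeta>_def QpX_add_def ..
  have \<zeta>Q: "\<And>j. \<zeta> j \<in> Qp" unfolding \<zeta>j using padic_add_in_Qp \<xi>Q \<eta>Q by blast
  have e\<zeta>: "denom_bound M \<zeta> e"
    using e\<xi> e\<eta> pfrac_add pfrac_rmod unfolding denom_bound_def \<zeta>j padic_add_level by blast
  have "pcong n (row_sum M \<zeta> i (n + e))
      (\<Sum>j\<in>row_support M i (n + e). M i j (n + e) * (\<xi> j (n + e) + \<eta> j (n + e)))"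
    using M e\<xi> by (rule pcong_row_sum_entries) (simp add: \<zeta>j padic_add_level pcong_rmod)
  also have "\<dots> = row_sum M \<xi> i (n + e) + row_sum M \<eta> i (n + e)"
    unfolding row_sum_def by (simp add: distrib_left sum.distrib)
  also have "pcong n \<dots> (matrix_op M \<xi> i n + matrix_op M \<eta> i n)"
    unfolding matrix_op_level[OF M \<xi>Q e\<xi> order_refl] matrix_op_level[OF M \<eta>Q e\<eta> order_refl]
    by (intro pcong_add pcong_rmod')
  finally have "matrix_op M \<zeta> i n = rmod (matrix_op M \<xi> i n + matrix_op M \<eta> i n) (of_nat p ^ n)"
    unfolding matrix_op_level[OF M \<zeta>Q e\<zeta> order_refl] by (rule rmod_pcong_eq)
  then show "matrix_op M (QpX_add p \<xi> \<eta>) i n = QpX_add p (matrix_op M \<xi>) (matrix_op M \<eta>) i n"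
    unfolding \<zeta>_def by (simp add: QpX_add_def padic_add_level)
qed

lemma matrix_op_smul:
  assumes M: "admissible_matrix M" and c: "c \<in> Zp p" and \<xi>: "\<xi> \<in> QpX p"
  shows "matrix_op M (QpX_smul p c \<xi>) = QpX_smul p c (matrix_op M \<xi>)"
proof (intro ext)
  fix i n
  obtain e where e\<xi>: "denom_bound M \<xi> e" using denom_bound_exists[OF M \<xi>] by blast
  define \<zeta> where "\<zeta> = QpX_smul p c \<xi>"
  define a where "a = c (n + e + e)"
  have \<xi>Q: "\<And>j. \<xi> j \<in> Qp" using \<xi> unfolding QpX_def by blast
  have \<zeta>j: "\<zeta> j = padic_smul p c (\<xi> j)" for j unfolding \<zeta>_def QpX_smul_def ..
  have \<zeta>Q: "\<And>j. \<zeta> j \<in> Qp" unfolding \<zeta>j using padic_smul_in_Qp[OF c] \<xi>Q by blast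
  have d0: "\<And>j. pfrac e (\<xi> j 0)" using e\<xi> unfolding denom_bound_def by blast
  have "pfrac (0 + e) (c (0 + nat (den (\<xi> j 0))) * \<xi> j 0)" for j
    using Zp_pfrac[OF c] d0 by (rule pfrac_mult)
  then have e\<zeta>: "denom_bound M \<zeta> e"
    using e\<xi> pfrac_rmod[of e _ 0] unfolding denom_bound_def \<zeta>j padic_smul_level by simp
  have "pcong n (row_sum M \<zeta> i (n + e)) (\<Sum>j\<in>row_support M i (n + e). M i j (n + e) * (a * \<xi> j (n + e)))"
    using M e\<xi> unfolding a_def
    by (rule pcong_row_sum_entries) (simp add: \<zeta>j pcong_padic_smul[OF \<xi>Q c d0])
  also have "\<dots> = a * row_sum M \<xi> i (n + e)"
    unfolding row_sum_def by (simp add: sum_distrib_left mult.left_commute)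
  also have "pcong n \<dots> (a * matrix_op M \<xi> i n)"
    unfolding matrix_op_level[OF M \<xi>Q e\<xi> order_refl] a_def
    using pcong_rmod' Zp_pfrac[OF c] by (rule pcong_mult_left[of n 0, simplified])
  also have "pcong n \<dots> (padic_smul p c (matrix_op M \<xi> i) n)"
    using pcong_padic_smul[OF matrix_op_in_Qp[OF M \<xi>Q e\<xi>, of i] c pfrac_matrix_op[OF M \<xi>Q e\<xi>]]
      pcong_sym unfolding a_def by simp
  finally have "matrix_op M \<zeta> i n = padic_smul p c (matrix_op M \<xi> i) n"
    unfolding matrix_op_level[OF M \<zeta>Q e\<zeta> order_refl] padic_smul_level
    using rmod_pcong_eq rmod_eq_self rmod_nonneg rmod_less by metis
  then show "matrix_op M (QpX_smul p c \<xi>) i n = QpX_smul p c (matrix_op M \<xi>) i n"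
    unfolding \<zeta>_def by (simp add: QpX_smul_def)
qed

lemma matrix_op_delta:
  assumes M: "admissible_matrix M"
  shows "matrix_op M (delta p j) i = M i j"
proof
  fix n
  obtain e where e: "denom_bound M (delta p j) e"
    using denom_bound_exists[OF M delta_in_QpX[of j]] by blast
  have \<delta>Q: "\<And>k. delta p j k \<in> Qp" using delta_in_QpX[of j] unfolding QpX_def by blast
  have MQ: "M i j \<in> Qp" by (rule admissible_padic[OF M])
  define m where "m = n + e"
  have L: "matrix_op M (delta p j) i n = rmod (row_sum M (delta p j) i m) (of_nat p ^ n)"
    using matrix_op_level[OF M \<delta>Q e] by (simp add: m_def)
  have entry: "M i k m * delta p j k m = (if k = j then M i j m * padic_one p m else 0)" for k
    unfolding delta_def padic_zero_def by simp
  have T: "row_sum M (delta p j) i m = (if j \<in> row_support M i m then M i j m * padic_one p m else 0)"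
    unfolding row_sum_def entry
    using sum.delta[OF finite_row_support[OF M], of j "\<lambda>_. M i j m * padic_one p m"] by simp
  have "pcong n (row_sum M (delta p j) i m) (M i j n)"
  proof (cases "j \<in> row_support M i m")
    case True
    have "pfrac e (M i j m)" using e padic_pfrac MQ unfolding denom_bound_def by blast
    have "pcong m (padic_one p m) 1" unfolding padic_one_def by (rule pcong_rmod)
    then have "pcong n (M i j m * padic_one p m) (M i j m * 1)"
      using \<open>pfrac e (M i j m)\<close> by (rule pcong_mult_left') (simp add: m_def)
    also have "pcong n (M i j m * 1) (M i j n)"
      using padic_pcong[OF MQ, of n m] by (simp add: m_def)
    finally show ?thesis unfolding T using True by simp
  next
    case False
    then have "M i j n = 0"
      using padic_level_rmod[OF MQ, of n m] unfolding row_support_def by (simp add: m_def)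
    then show ?thesis unfolding T using False by simp
  qed
  then have "matrix_op M (delta p j) i n = rmod (M i j n) (of_nat p ^ n)"
    unfolding L by (rule rmod_pcong_eq)
  also have "\<dots> = M i j n"
    using rmod_eq_self padic_setD(1,2)[OF MQ] by blast
  finally show "matrix_op M (delta p j) i n = M i j n" .
qed

lemma op_matrix_matrix_op: "admissible_matrix M \<Longrightarrow> op_matrix p (matrix_op M) = M"
  unfolding op_matrix_def by (intro ext) (simp add: matrix_op_delta)

definition target_block :: "('x \<Rightarrow> 'x \<Rightarrow> nat \<Rightarrow> rat) \<Rightarrow> 'x set \<Rightarrow> nat \<Rightarrow> 'x set" where
  "target_block M P e = fst ` {(i, j). M i j \<notin> Zp p} \<union> (\<Union>j\<in>P. {i. M i j e \<noteq> 0})"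

lemma finite_target_block:
  assumes M: "admissible_matrix M" and "finite P"
  shows "finite (target_block M P e)"
proof -
  have "finite {(i, j). M i j \<notin> Zp p}" using M unfolding admissible_matrix_def by blast
  then show ?thesis
    unfolding target_block_def using \<open>finite P\<close> by (simp add: finite_column_support[OF M])
qed

lemma matrix_op_in_block:
  assumes M: "admissible_matrix M" and e: "denom_bound M \<xi> e"
    and \<xi>': "\<xi>' \<in> block P" and agree: "\<forall>j\<in>P. \<xi>' j 0 = \<xi> j 0"
  shows "denom_bound M \<xi>' e" and "matrix_op M \<xi>' \<in> block (target_block M P e)"
proof -
  have "pfrac e (\<xi>' j 0)" for j
  proof (cases "j \<in> P")
    case True
    then show ?thesis using agree e unfolding denom_bound_def by simp
  next
    case False
    then show ?thesis
      using Zp_pfrac[OF block_Zp[OF \<xi>' False]] pfrac_mono by blast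
  qed
  then show e': "denom_bound M \<xi>' e"
    using e unfolding denom_bound_def by blast
  have \<xi>'Q: "\<And>j. \<xi>' j \<in> Qp" using \<xi>' by (rule block_padic)
  have "matrix_op M \<xi>' i \<in> block_factor (target_block M P e) i" for i
  proof (cases "i \<in> target_block M P e")
    case True
    then show ?thesis
      unfolding block_factor_def using matrix_op_in_Qp[OF M \<xi>'Q e'] by simp
  next
    case False
    then have "M i j \<in> Zp p" for j
      unfolding target_block_def by (auto simp: image_iff)
    moreover have "\<xi>' j \<in> Zp p" if "M i j e \<noteq> 0" for j
      using False that block_Zp[OF \<xi>'] unfolding target_block_def by blast
    ultimately show ?thesis
      using matrix_op_in_Zp[OF M \<xi>'Q e'] by (simp add: Zp_in_block_factor)
  qed
  then show "matrix_op M \<xi>' \<in> block (target_block M P e)"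
    unfolding block_def by simp
qed

lemma matrix_op_level_local:
  assumes M: "admissible_matrix M" and \<xi>: "\<And>j. \<xi> j \<in> Qp" and \<xi>': "\<And>j. \<xi>' j \<in> Qp"
    and e: "denom_bound M \<xi> e" and e': "denom_bound M \<xi>' e"
    and agree: "\<forall>j\<in>row_support M i (N + e). \<xi>' j (N + e) = \<xi> j (N + e)"
  shows "matrix_op M \<xi>' i N = matrix_op M \<xi> i N"
proof -
  have "row_sum M \<xi>' i (N + e) = row_sum M \<xi> i (N + e)"
    unfolding row_sum_def using agree by simp
  then show ?thesis
    using matrix_op_level[OF M \<xi> e order_refl] matrix_op_level[OF M \<xi>' e' order_refl] by simp
qed

lemma matrix_op_cylinder:
  assumes M: "admissible_matrix M" and e: "denom_bound M \<xi> e" and \<xi>: "\<xi> \<in> block P"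
  shows "matrix_op M ` cylinder P (P \<union> (\<Union>i\<in>G. row_support M i (N + e))) (N + e) \<xi>
      \<subseteq> cylinder (target_block M P e) G N (matrix_op M \<xi>)"
proof clarify
  fix \<xi>' assume "\<xi>' \<in> cylinder P (P \<union> (\<Union>i\<in>G. row_support M i (N + e))) (N + e) \<xi>"
  then have \<xi>': "\<xi>' \<in> block P"
    and agree: "\<forall>j\<in>P \<union> (\<Union>i\<in>G. row_support M i (N + e)). \<xi>' j (N + e) = \<xi> j (N + e)"
    unfolding cylinder_def by auto
  have "\<forall>j\<in>P. \<xi>' j 0 = \<xi> j 0"
    using agree padic_eq_below[OF block_padic[OF \<xi>'] block_padic[OF \<xi>]] by blast
  note block = matrix_op_in_block[OF M e \<xi>' this]
  have "matrix_op M \<xi>' i N = matrix_op M \<xi> i N" if "i \<in> G" for i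
    using matrix_op_level_local[OF M block_padic[OF \<xi>] block_padic[OF \<xi>'] e block(1)] agree that
    by blast
  then show "matrix_op M \<xi>' \<in> cylinder (target_block M P e) G N (matrix_op M \<xi>)"
    using block(2) unfolding cylinder_def by blast
qed

lemma matrix_op_continuous:
  fixes M :: "'x \<Rightarrow> 'x \<Rightarrow> nat \<Rightarrow> rat"
  assumes M: "admissible_matrix M"
  shows "tau_continuous p (matrix_op M)"
  unfolding tau_continuous_def
proof (intro allI impI)
  fix U :: "('x \<Rightarrow> nat \<Rightarrow> rat) set"
  assume "tau_open p U"
  then have U: "\<forall>\<eta>\<in>U \<inter> block Q. \<exists>G N. finite G \<and> cylinder Q G N \<eta> \<subseteq> U" if "finite Q" for Q
    using that unfolding tau_open_iff by blast
  show "tau_open p {\<xi> \<in> QpX p. matrix_op M \<xi> \<in> U}"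
    unfolding tau_open_iff
  proof (intro conjI allI impI ballI)
    show "{\<xi> \<in> QpX p. matrix_op M \<xi> \<in> U} \<subseteq> QpX p" by auto
    fix P \<xi> assume P: "finite P" and "\<xi> \<in> {\<xi> \<in> QpX p. matrix_op M \<xi> \<in> U} \<inter> block P"
    then have \<xi>: "\<xi> \<in> QpX p" "matrix_op M \<xi> \<in> U" "\<xi> \<in> block P" by auto
    obtain e where e: "denom_bound M \<xi> e" using denom_bound_exists[OF M \<xi>(1)] by blast
    have "matrix_op M \<xi> \<in> U \<inter> block (target_block M P e)"
      using matrix_op_in_block(2)[OF M e \<xi>(3)] \<xi>(2) by simp
    then obtain G N where G: "finite G" "cylinder (target_block M P e) G N (matrix_op M \<xi>) \<subseteq> U"
      using U[OF finite_target_block[OF M P]] by blast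
    define H where "H = P \<union> (\<Union>i\<in>G. row_support M i (N + e))"
    have "finite H"
      unfolding H_def using P G(1) by (simp add: finite_row_support[OF M])
    moreover have "cylinder P H (N + e) \<xi> \<subseteq> {\<xi> \<in> QpX p. matrix_op M \<xi> \<in> U}"
    proof
      fix \<xi>' assume \<xi>': "\<xi>' \<in> cylinder P H (N + e) \<xi>"
      then have "matrix_op M \<xi>' \<in> matrix_op M ` cylinder P H (N + e) \<xi>" by (rule imageI)
      then have "matrix_op M \<xi>' \<in> cylinder (target_block M P e) G N (matrix_op M \<xi>)"
        using matrix_op_cylinder[OF M e \<xi>(3), where G = G and N = N, folded H_def] by (rule rev_subsetD)
      then have "matrix_op M \<xi>' \<in> U" using G(2) by (rule rev_subsetD)
      moreover have "\<xi>' \<in> block P" using \<xi>' unfolding cylinder_def by simp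
      then have "\<xi>' \<in> QpX p" using block_subset_QpX[OF P] by (rule rev_subsetD)
      ultimately show "\<xi>' \<in> {\<xi> \<in> QpX p. matrix_op M \<xi> \<in> U}" by simp
    qed
    ultimately show "\<exists>H N. finite H \<and> cylinder P H N \<xi> \<subseteq> {\<xi> \<in> QpX p. matrix_op M \<xi> \<in> U}"
      by blast
  qed
qed

lemma matrix_op_bounded: "admissible_matrix M \<Longrightarrow> matrix_op M \<in> bounded_ops p"
  unfolding bounded_ops_def Zp_linear_def
  by (simp add: matrix_op_in_QpX matrix_op_add matrix_op_smul matrix_op_continuous)

end

theorem theorem2p26:
  fixes p :: nat and M :: "'x \<Rightarrow> 'x \<Rightarrow> (nat \<Rightarrow> rat)"
  assumes "prime p"
    and "countable (UNIV :: 'x set)"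
    and "\<forall>i j. M i j \<in> padic_set p"
  shows "(\<exists>A \<in> bounded_ops p. M = op_matrix p A) \<longleftrightarrow>
           (finite {(i, j). M i j \<notin> Zp p}
            \<and> (\<forall>k. \<forall>\<epsilon>::real. \<epsilon> > 0 \<longrightarrow>
                  finite {i. padic_abs p (M i k) > \<epsilon>}
                \<and> finite {j. padic_abs p (M k j) > \<epsilon>}))"
proof -
  interpret padic p using assms(1) by unfold_locales
  have "(\<exists>A \<in> bounded_ops p. M = op_matrix p A) \<longleftrightarrow> admissible_matrix M"
    using op_matrix_admissible matrix_op_bounded op_matrix_matrix_op by metis
  then show ?thesis
    unfolding admissible_matrix_def using assms(3) by blast
qed

end
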